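(* Let $k$ be a field of characteristic two and let $k[x,y,z,w]$ be the polynomial ring in four variables over $k$. Consider the following three forms of a $k$-algebra automorphism $T$ of $k[x,y,z,w]$: (i) There is $f \in k[x,y,z]$ such that $T(x)=x$, $T(y)=y$, $T(z)=z$, $T(w)=w+f$. (ii) There are $\xi \in k[x,y]\setminus\{0\}$ and $\eta \in k[x,y,z]$ such that $T(x)=x$, $T(y)=y$, $T(z)=z+\xi$, $T(w)=w+\eta(x,\,y,\,z^2+\xi z)$. (iii) There are $\alpha \in k[x]\setminus\{0\}$, $\beta \in k[x,y]\setminus\{0\}$ and $\gamma \in k[x,y,z,w]$ such that, with $d := \gcd_{k[x,y]}(\alpha,\beta)$, $a := \alpha/d$, $b := \beta/d$ and $f_1 := x$, $f_2 := y^2+\alpha y$, $f_3 := z^2+\beta(x,\,y^2+\alpha y)\,z$, $f_4 := a z + b(x,\,y^2+\alpha y)\,y$, one has $T(x)=x$, $T(y)=y+\alpha(f_1)$, $T(z)=z+\beta(f_1,f_2)$, $T(w)=w+\gamma(f_1,f_2,f_3,f_4)$. Then: (1) Every $k$-algebra automorphism $T$ of $k[x,y,z,w]$ of any one of the forms (i), (ii), (iii) is an involution (i.e. $T^2=\mathrm{id}$). (2) For every triangular automorphism $\tau$ of $k[x,y,z,w]$, the following are equivalent: (2.1) $\tau$ is an involution; (2.2) there exist a $k$-algebra automorphism $\varphi$ of $k[x,y,z,w]$ and a triangular automorphism $T$ of $k[x,y,z,w]$ of one of the forms (i), (ii), (iii) such that $\tau = \varphi\circ T\circ\varphi^{-1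}$.
   Context: A $k$-algebra automorphism $\sigma$ of $k[x_1,\dots,x_n]$ is triangular if $\sigma(x_i)=\lambda_i x_i+\phi_i$ with $\lambda_i\in k\setminus\{0\}$ and $\phi_i\in k[x_1,\dots,x_{i-1}]$ for all $i$; here the variables are ordered $x_1=x$, $x_2=y$, $x_3=z$, $x_4=w$. An involution is an automorphism $\sigma$ with $\sigma^2=\mathrm{id}$. Notation such as $\eta(x,y,z^2+\xi z)$ means substituting the given polynomials for the variables of $\eta$; the gcd in (iii) is taken in $k[x,y]$ (any choice up to a unit). *)

theory Defs
  imports "HOL-Computational_Algebra.Computational_Algebra"
begin

text \<open>The polynomial ring k[x,y,z,w] is represented as the iterated polynomial ring
  ((k[x])[y])[z])[w], i.e. the type 'k poly poly poly poly.
  The variable x is innermost, w outermost.\<close>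

type_synonym 'k R4 = "'k poly poly poly poly"

definition L0 :: "'k::comm_ring_1 \<Rightarrow> 'k R4" where "L0 c = [:[:[:[:c:]:]:]:]"
definition L1 :: "'k::comm_ring_1 poly \<Rightarrow> 'k R4" where "L1 p = [:[:[:p:]:]:]"
definition L2 :: "'k::comm_ring_1 poly poly \<Rightarrow> 'k R4" where "L2 p = [:[:p:]:]"
definition L3 :: "'k::comm_ring_1 poly poly poly \<Rightarrow> 'k R4" where "L3 p = [:p:]"

definition VX :: "'k::comm_ring_1 R4" where "VX = L1 [:0, 1:]"
definition VY :: "'k::comm_ring_1 R4" where "VY = L2 [:0, 1:]"
definition VZ :: "'k::comm_ring_1 R4" where "VZ = L3 [:0, 1:]"
definition VW :: "'k::comm_ring_1 R4" where "VW = [:0, 1:]"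

text \<open>Substitution: subst p a b c d = p(a,b,c,d).\<close>
definition subst4 :: "'k::comm_ring_1 R4 \<Rightarrow> 'k R4 \<Rightarrow> 'k R4 \<Rightarrow> 'k R4 \<Rightarrow> 'k R4 \<Rightarrow> 'k R4" where
  "subst4 p a b c d =
     poly (map_poly (\<lambda>q3. poly (map_poly (\<lambda>q2. poly (map_poly (\<lambda>q1. poly (map_poly L0 q1) a) q2) b) q3) c) p) d"

definition kalg_aut :: "('k::comm_ring_1 R4 \<Rightarrow> 'k R4) \<Rightarrow> bool" where
  "kalg_aut T \<longleftrightarrow>
     (\<forall>p q. T (p + q) = T p + T q) \<and> (\<forall>p q. T (p * q) = T p * T q) \<and>
     (\<forall>c. T (L0 c) = L0 c) \<and> bij T"

definition triangular :: "('k::comm_ring_1 R4 \<Rightarrow> 'k R4) \<Rightarrow> bool" where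
  "triangular \<sigma> \<longleftrightarrow> kalg_aut \<sigma> \<and>
     (\<exists>l1 l2 l3 l4 (p1::'k) (p2::'k poly) (p3::'k poly poly) (p4::'k poly poly poly).
        l1 \<noteq> 0 \<and> l2 \<noteq> 0 \<and> l3 \<noteq> 0 \<and> l4 \<noteq> 0 \<and>
        \<sigma> VX = L0 l1 * VX + L0 p1 \<and> \<sigma> VY = L0 l2 * VY + L1 p2 \<and>
        \<sigma> VZ = L0 l3 * VZ + L2 p3 \<and> \<sigma> VW = L0 l4 * VW + L3 p4)"

definition involution :: "('a \<Rightarrow> 'a) \<Rightarrow> bool" where
  "involution T \<longleftrightarrow> T \<circ> T = id"

definition form_i :: "('k::comm_ring_1 R4 \<Rightarrow> 'k R4) \<Rightarrow> bool" where
  "form_i T \<longleftrightarrow> (\<exists>f :: 'k poly poly poly.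
     T VX = VX \<and> T VY = VY \<and> T VZ = VZ \<and> T VW = VW + L3 f)"

definition form_ii :: "('k::comm_ring_1 R4 \<Rightarrow> 'k R4) \<Rightarrow> bool" where
  "form_ii T \<longleftrightarrow> (\<exists>(\<xi> :: 'k poly poly) (\<eta> :: 'k poly poly poly). \<xi> \<noteq> 0 \<and>
     T VX = VX \<and> T VY = VY \<and> T VZ = VZ + L2 \<xi> \<and>
     T VW = VW + subst4 (L3 \<eta>) VX VY (VZ ^ 2 + L2 \<xi> * VZ) VW)"

text \<open>Form (iii).  d is a gcd of alpha and beta in k[x,y] (any choice up to a unit),
  a = alpha/d and b = beta/d.\<close>
definition is_gcd :: "'a::comm_semiring_1 \<Rightarrow> 'a \<Rightarrow> 'a \<Rightarrow> bool" where
  "is_gcd d p q \<longleftrightarrow> d dvd p \<and> d dvd q \<and> (\<forall>e. e dvd p \<and> e dvd q \<longrightarrow> e dvd d)"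

definition form_iii :: "('k::field R4 \<Rightarrow> 'k R4) \<Rightarrow> bool" where
  "form_iii T \<longleftrightarrow> (\<exists>(\<alpha> :: 'k poly) (\<beta> :: 'k poly poly) (\<gamma> :: 'k R4) d a b.
     \<alpha> \<noteq> 0 \<and> \<beta> \<noteq> 0 \<and> is_gcd d [:\<alpha>:] \<beta> \<and> [:\<alpha>:] = d * a \<and> \<beta> = d * b \<and>
     (let f1 = VX; f2 = VY ^ 2 + L1 \<alpha> * VY;
          f3 = VZ ^ 2 + subst4 (L2 \<beta>) VX f2 VZ VW * VZ;
          f4 = L2 a * VZ + subst4 (L2 b) VX f2 VZ VW * VY
      in T VX = VX \<and> T VY = VY + subst4 (L1 \<alpha>) f1 VY VZ VW \<and>
         T VZ = VZ + subst4 (L2 \<beta>) f1 f2 VZ VW \<and>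
         T VW = VW + subst4 \<gamma> f1 f2 f3 f4))"

end

theory Submission
  imports Defs "HOL-Computational_Algebra.Field_as_Ring"
begin

text \<open>
  Every standard form moves each generator \<open>v\<close> to \<open>v + c\<close> with \<open>c\<close> fixed, and in characteristic
  two this already means that \<open>v\<close> is moved back by a second application; for form (iii) the
  point is that \<open>T\<close> fixes \<open>f\<^sub>2, f\<^sub>3, f\<^sub>4\<close>, which rests on \<open>a \<beta> = b \<alpha>\<close>.

  Conversely, the scalars of a triangular involution square to one, hence are one. If \<open>x\<close> is moved
  to \<open>x + c\<close> with \<open>p(x + c) = p(x)\<close> the shift of \<open>y\<close>, then \<open>y + x p(x)/c\<close> is invariant, and taking
  it as the new first variable reduces to the case where \<open>x\<close> is fixed. There everything follows
  from the characteristic-two fact that \<open>g(t + \<xi>) = g(t)\<close> if and only if \<open>g\<close> is a polynomial in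
  \<open>t\<^sup>2 + \<xi> t\<close>: the shifts of \<open>z\<close> and \<open>w\<close> are invariant polynomials, giving forms (i) and (ii)
  (after exchanging \<open>y\<close> and \<open>z\<close> if only \<open>y\<close> moves). When both \<open>y\<close> and \<open>z\<close> move, the shift
  of \<open>w\<close> is written in the basis \<open>1, z\<close> over polynomials in \<open>f\<^sub>3\<close>, its coefficients in the basis
  \<open>1, y\<close> over polynomials in \<open>f\<^sub>2\<close>; invariance relates the two components, and since \<open>a\<close> and \<open>b\<close>
  are coprime it follows that the shift is a polynomial in \<open>x, f\<^sub>2, f\<^sub>3, f\<^sub>4\<close>, which is form (iii).
\<close>

section \<open>Ring homomorphisms and evaluation\<close>

definition ring_hom :: "('a::comm_ring_1 \<Rightarrow> 'b::comm_ring_1) \<Rightarrow> bool" where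
  "ring_hom h \<longleftrightarrow> (\<forall>x y. h (x + y) = h x + h y) \<and> (\<forall>x y. h (x * y) = h x * h y) \<and> h 1 = 1"

lemma ring_hom_add: "ring_hom h \<Longrightarrow> h (x + y) = h x + h y"
  by (simp add: ring_hom_def)

lemma ring_hom_mult: "ring_hom h \<Longrightarrow> h (x * y) = h x * h y"
  by (simp add: ring_hom_def)

lemma ring_hom_1: "ring_hom h \<Longrightarrow> h 1 = 1"
  by (simp add: ring_hom_def)

lemma ring_hom_0: "ring_hom h \<Longrightarrow> h 0 = 0"
  using ring_hom_add[of h 0 0] by simp

lemma ring_hom_uminus: "ring_hom h \<Longrightarrow> h (- x) = - h x"
  using ring_hom_add[of h x "- x"] ring_hom_0[of h] by (simp add: eq_neg_iff_add_eq_0 add.commute)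

lemma ring_hom_diff: "ring_hom h \<Longrightarrow> h (x - y) = h x - h y"
  using ring_hom_add[of h x "- y"] ring_hom_uminus[of h y] by simp

lemma ring_hom_power: "ring_hom h \<Longrightarrow> h (x ^ n) = h x ^ n"
  by (induction n) (simp_all add: ring_hom_1 ring_hom_mult)

lemma ring_hom_comp: "ring_hom f \<Longrightarrow> ring_hom g \<Longrightarrow> ring_hom (f \<circ> g)"
  by (simp add: ring_hom_def)

lemma ring_hom_id: "ring_hom (\<lambda>x. x)"
  by (simp add: ring_hom_def)

lemma ring_hom_const_poly: "ring_hom (\<lambda>c::'a::comm_ring_1. [:c:])"
  by (simp add: ring_hom_def one_pCons)

lemma range_ring_hom_add:
  assumes f: "ring_hom f" and "x \<in> range f" "y \<in> range f"
  shows "x + y \<in> range f"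
proof -
  obtain a b where "x = f a" "y = f b" using assms(2,3) by blast
  then have "x + y = f (a + b)" by (simp add: ring_hom_add[OF f])
  then show ?thesis by blast
qed

lemma range_ring_hom_mult:
  assumes f: "ring_hom f" and "x \<in> range f" "y \<in> range f"
  shows "x * y \<in> range f"
proof -
  obtain a b where "x = f a" "y = f b" using assms(2,3) by blast
  then have "x * y = f (a * b)" by (simp add: ring_hom_mult[OF f])
  then show ?thesis by blast
qed

lemma range_ring_hom_diff:
  assumes f: "ring_hom f" and "x \<in> range f" "y \<in> range f"
  shows "x - y \<in> range f"
proof -
  obtain a b where "x = f a" "y = f b" using assms(2,3) by blast
  then have "x - y = f (a - b)" by (simp add: ring_hom_diff[OF f])
  then show ?thesis by blast
qed

definition eval_hom :: "('a::zero \<Rightarrow> 'b::comm_ring_1) \<Rightarrow> 'b \<Rightarrow> 'a poly \<Rightarrow> 'b" where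
  "eval_hom h t q = poly (map_poly h q) t"

lemma eval_hom_pCons: "h 0 = 0 \<Longrightarrow> eval_hom h t (pCons a p) = h a + t * eval_hom h t p"
  by (simp add: eval_hom_def map_poly_pCons)

lemma eval_hom_0[simp]: "eval_hom h t 0 = 0"
  by (simp add: eval_hom_def)

lemma eval_hom_const: "h 0 = 0 \<Longrightarrow> eval_hom h t [:a:] = h a"
  by (simp add: eval_hom_pCons)

lemma eval_hom_add: "ring_hom h \<Longrightarrow> eval_hom h t (p + q) = eval_hom h t p + eval_hom h t q"
proof (induction p q rule: poly_induct2)
  case 0
  then show ?case by simp
next
  case (pCons a p b q)
  then show ?case using ring_hom_0[OF pCons(2)]
    by (simp add: eval_hom_pCons ring_hom_add algebra_simps)
qed

lemma eval_hom_smult: "ring_hom h \<Longrightarrow> eval_hom h t (smult a q) = h a * eval_hom h t q"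
  by (induction q) (simp_all add: eval_hom_pCons ring_hom_0 ring_hom_mult algebra_simps)

lemma eval_hom_mult: "ring_hom h \<Longrightarrow> eval_hom h t (p * q) = eval_hom h t p * eval_hom h t q"
proof (induction p)
  case 0
  then show ?case by simp
next
  case (pCons a p)
  have "eval_hom h t (pCons 0 (p * q)) = t * eval_hom h t (p * q)"
    using eval_hom_pCons[of h t 0 "p * q"] ring_hom_0[OF pCons(3)] by simp
  then show ?case using pCons
    by (simp add: eval_hom_add eval_hom_smult eval_hom_pCons ring_hom_0 algebra_simps)
qed

lemma ring_hom_eval_hom: "ring_hom h \<Longrightarrow> ring_hom (eval_hom h t)"
  using eval_hom_const[of h t 1] unfolding ring_hom_def[of "eval_hom h t"]
  by (simp add: eval_hom_add eval_hom_mult ring_hom_0 ring_hom_1 one_pCons)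

lemma eval_hom_X: "ring_hom h \<Longrightarrow> eval_hom h t [:0, 1:] = t"
  by (simp add: eval_hom_pCons ring_hom_0 ring_hom_1)

lemma ring_hom_eval_hom_commute:
  assumes H: "ring_hom H" and h: "ring_hom h"
  shows "H (eval_hom h t q) = eval_hom (H \<circ> h) (H t) q"
proof (induction q)
  case 0
  then show ?case by (simp add: ring_hom_0[OF H])
next
  case (pCons a q)
  have "h 0 = 0" "(H \<circ> h) 0 = 0"
    using ring_hom_0[OF H] ring_hom_0[OF h] by auto
  with pCons show ?case
    by (simp add: eval_hom_pCons ring_hom_add[OF H] ring_hom_mult[OF H])
qed

lemma ring_hom_eq_eval_hom:
  assumes g: "ring_hom g"
  shows "g q = eval_hom (\<lambda>a. g [:a:]) (g [:0, 1:]) q"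
proof (induction q)
  case 0
  then show ?case by (simp add: ring_hom_0[OF g])
next
  case (pCons a q)
  have "pCons a q = [:a:] + [:0, 1:] * q" by simp
  then have "g (pCons a q) = g [:a:] + g [:0, 1:] * g q"
    using g by (metis ring_hom_add ring_hom_mult)
  with pCons show ?case using ring_hom_0[OF g] by (simp add: eval_hom_pCons)
qed

lemma eval_hom_in_range:
  assumes f: "ring_hom f" and h: "\<And>a. h a \<in> range f" "h 0 = 0" and t: "t \<in> range f"
  shows "eval_hom h t q \<in> range f"
proof (induction q)
  case 0
  have "0 = f 0" by (simp add: ring_hom_0[OF f])
  then show ?case by (metis eval_hom_0 rangeI)
next
  case (pCons a q)
  then show ?case
    by (simp add: eval_hom_pCons h range_ring_hom_add[OF f] range_ring_hom_mult[OF f] t)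
qed

lemma eval_hom_map_poly:
  "g 0 = 0 \<Longrightarrow> h 0 = 0 \<Longrightarrow> eval_hom h t (map_poly g r) = eval_hom (h \<circ> g) t r"
  by (simp add: eval_hom_def map_poly_map_poly)

lemma pcompose_eq_eval_hom: "pcompose p q = eval_hom (\<lambda>x. [:x:]) q p"
  by (simp add: pcompose_altdef eval_hom_def)

lemma ring_hom_pcompose_left: "ring_hom (\<lambda>p. pcompose p q)"
  by (simp add: pcompose_eq_eval_hom ring_hom_eval_hom ring_hom_const_poly)

lemma ring_hom_map_poly: "ring_hom h \<Longrightarrow> ring_hom (map_poly h)"
proof -
  assume h: "ring_hom h"
  have "map_poly h p = eval_hom ((\<lambda>x. [:x:]) \<circ> h) [:0, 1:] p" for p
    by (induction p) (simp_all add: map_poly_pCons eval_hom_pCons ring_hom_0[OF h])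
  then have "map_poly h = eval_hom ((\<lambda>x. [:x:]) \<circ> h) [:0, 1:]" ..
  then show ?thesis
    by (simp add: ring_hom_eval_hom ring_hom_comp[OF ring_hom_const_poly h])
qed

lemma map_poly_pcompose:
  assumes h: "ring_hom h"
  shows "map_poly h (pcompose p q) = pcompose (map_poly h p) (map_poly h q)"
proof -
  have "map_poly h (pcompose p q) = eval_hom (map_poly h \<circ> (\<lambda>x. [:x:])) (map_poly h q) p"
    unfolding pcompose_eq_eval_hom
    by (rule ring_hom_eval_hom_commute[OF ring_hom_map_poly[OF h] ring_hom_const_poly])
  also have "map_poly h \<circ> (\<lambda>x. [:x:]) = (\<lambda>x. [:x:]) \<circ> h"
    by (rule ext) (simp add: ring_hom_0[OF h] map_poly_pCons)
  also have "eval_hom ((\<lambda>x. [:x:]) \<circ> h) (map_poly h q) p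
      = eval_hom (\<lambda>x. [:x:]) (map_poly h q) (map_poly h p)"
    by (rule eval_hom_map_poly[symmetric]) (simp_all add: ring_hom_0[OF h])
  finally show ?thesis by (simp add: pcompose_eq_eval_hom)
qed

lemma ring_hom_L0: "ring_hom (L0 :: 'k::comm_ring_1 \<Rightarrow> 'k R4)"
  by (simp add: ring_hom_def L0_def one_pCons)

lemma ring_hom_L1: "ring_hom (L1 :: 'k::comm_ring_1 poly \<Rightarrow> 'k R4)"
  by (simp add: ring_hom_def L1_def one_pCons)

lemma ring_hom_L2: "ring_hom (L2 :: 'k::comm_ring_1 poly poly \<Rightarrow> 'k R4)"
  by (simp add: ring_hom_def L2_def one_pCons)

lemma ring_hom_L3: "ring_hom (L3 :: 'k::comm_ring_1 poly poly poly \<Rightarrow> 'k R4)"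
  by (simp add: ring_hom_def L3_def one_pCons)

lemma L_inj[simp]:
  "L0 a = L0 b \<longleftrightarrow> a = b" "L1 p = L1 q \<longleftrightarrow> p = q"
  "L2 p' = L2 q' \<longleftrightarrow> p' = q'" "L3 p'' = L3 q'' \<longleftrightarrow> p'' = q''"
  by (auto simp: L0_def L1_def L2_def L3_def)

lemma L_const: "L1 [:c:] = L0 c" "L2 [:p:] = L1 p" "L3 [:q:] = L2 q"
  by (simp_all add: L0_def L1_def L2_def L3_def)

lemma L_simps:
  "L0 (a + b) = L0 a + L0 b" "L0 (a * b) = L0 a * L0 b" "L0 (a - b) = L0 a - L0 b" "L0 (- a) = - L0 a"
  "L1 (p + q) = L1 p + L1 q" "L1 (p * q) = L1 p * L1 q" "L1 (p - q) = L1 p - L1 q" "L1 (- p) = - L1 p"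
  "L2 (p' + q') = L2 p' + L2 q'" "L2 (p' * q') = L2 p' * L2 q'" "L2 (p' - q') = L2 p' - L2 q'"
  "L2 (- p') = - L2 p'"
  "L3 (p'' + q'') = L3 p'' + L3 q''" "L3 (p'' * q'') = L3 p'' * L3 q''"
  "L3 (p'' - q'') = L3 p'' - L3 q''" "L3 (- p'') = - L3 p''"
  "L0 0 = 0" "L1 0 = 0" "L2 0 = 0" "L3 0 = 0" "L0 1 = 1" "L1 1 = 1" "L2 1 = 1" "L3 1 = 1"
  "L0 (a ^ n) = L0 a ^ n" "L1 (p ^ n) = L1 p ^ n" "L2 (p' ^ n) = L2 p' ^ n" "L3 (p'' ^ n) = L3 p'' ^ n"
  by (simp_all add: ring_hom_add ring_hom_mult ring_hom_diff ring_hom_uminus ring_hom_0 ring_hom_1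
      ring_hom_power ring_hom_L0 ring_hom_L1 ring_hom_L2 ring_hom_L3)

lemma L_linear: "L1 [:c, 1:] = VX + L0 c" "L2 [:p, 1:] = VY + L1 p" "L3 [:q, 1:] = VZ + L2 q"
proof -
  have "[:c, 1:] = [:0, 1:] + [:c:]" "[:p, 1:] = [:0, 1:] + [:p:]" "[:q, 1:] = [:0, 1:] + [:q:]"
    by simp_all
  then show "L1 [:c, 1:] = VX + L0 c" "L2 [:p, 1:] = VY + L1 p" "L3 [:q, 1:] = VZ + L2 q"
    by (simp_all only: L_simps L_const VX_def VY_def VZ_def)
qed

lemma L_quadratic: "L2 [:0, p, 1:] = VY\<^sup>2 + L1 p * VY" "L3 [:0, q, 1:] = VZ\<^sup>2 + L2 q * VZ"
proof -
  have "[:0, p, 1:] = [:0, 1:]\<^sup>2 + [:p:] * [:0, 1:]" "[:0, q, 1:] = [:0, 1:]\<^sup>2 + [:q:] * [:0, 1:]"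
    by (simp_all add: power2_eq_square)
  then show "L2 [:0, p, 1:] = VY\<^sup>2 + L1 p * VY" "L3 [:0, q, 1:] = VZ\<^sup>2 + L2 q * VZ"
    by (simp_all only: L_simps L_const VY_def VZ_def)
qed

lemma coeff_VX_eq_1:
  assumes "L0 u * VX + L0 v = (VX :: 'k::comm_ring_1 R4)"
  shows "u = 1"
proof -
  have "[:v, u:] = [:v:] + [:0, 1:] * [:u:]" by simp
  then have "L1 [:v, u:] = L0 u * VX + L0 v" by (simp only: L_simps L_const VX_def algebra_simps)
  then show ?thesis using assms by (simp add: VX_def)
qed

lemma coeff_VY_eq_1:
  assumes "L0 u * VY + L1 w = (VY :: 'k::comm_ring_1 R4)"
  shows "u = 1"
proof -
  have "[:w, [:u:]:] = [:w:] + [:0, 1:] * [:[:u:]:]" by simp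
  then have "L2 [:w, [:u:]:] = L0 u * VY + L1 w" by (simp only: L_simps L_const VY_def algebra_simps)
  then show ?thesis using assms by (simp add: VY_def one_pCons)
qed

lemma coeff_VZ_eq_1:
  assumes "L0 u * VZ + L2 w = (VZ :: 'k::comm_ring_1 R4)"
  shows "u = 1"
proof -
  have "[:w, [:[:u:]:]:] = [:w:] + [:0, 1:] * [:[:[:u:]:]:]" by simp
  then have "L3 [:w, [:[:u:]:]:] = L0 u * VZ + L2 w" by (simp only: L_simps L_const VZ_def algebra_simps)
  then show ?thesis using assms by (simp add: VZ_def one_pCons)
qed

lemma coeff_VW_eq_1:
  assumes "L0 u * VW + L3 w = (VW :: 'k::comm_ring_1 R4)"
  shows "u = 1"
  using assms by (simp add: L0_def L3_def VW_def one_pCons)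

definition subst1 :: "'k::comm_ring_1 R4 \<Rightarrow> 'k poly \<Rightarrow> 'k R4" where
  "subst1 a = eval_hom L0 a"

definition subst2 :: "'k::comm_ring_1 R4 \<Rightarrow> 'k R4 \<Rightarrow> 'k poly poly \<Rightarrow> 'k R4" where
  "subst2 a b = eval_hom (subst1 a) b"

definition subst3 :: "'k::comm_ring_1 R4 \<Rightarrow> 'k R4 \<Rightarrow> 'k R4 \<Rightarrow> 'k poly poly poly \<Rightarrow> 'k R4" where
  "subst3 a b c = eval_hom (subst2 a b) c"

lemma subst4_eq_eval_hom: "subst4 p a b c d = eval_hom (subst3 a b c) d p"
  by (simp add: subst4_def subst3_def subst2_def subst1_def eval_hom_def[abs_def])

lemma ring_hom_subst1: "ring_hom (subst1 a)"
  by (simp add: subst1_def ring_hom_eval_hom ring_hom_L0)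

lemma ring_hom_subst2: "ring_hom (subst2 a b)"
  by (simp add: subst2_def ring_hom_eval_hom ring_hom_subst1)

lemma ring_hom_subst3: "ring_hom (subst3 a b c)"
  by (simp add: subst3_def ring_hom_eval_hom ring_hom_subst2)

lemma ring_hom_subst4: "ring_hom (\<lambda>p. subst4 p a b c d)"
  by (simp add: subst4_eq_eval_hom ring_hom_eval_hom ring_hom_subst3)

lemma subst_const:
  "subst1 a [:x:] = L0 x" "subst2 a b [:p:] = subst1 a p" "subst3 a b c [:q:] = subst2 a b q"
  by (simp_all add: subst1_def subst2_def subst3_def eval_hom_const ring_hom_0 ring_hom_L0
      ring_hom_subst1 ring_hom_subst2)

lemma subst_X: "subst1 a [:0, 1:] = a" "subst2 a b [:0, 1:] = b" "subst3 a b c [:0, 1:] = c"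
  using eval_hom_X[OF ring_hom_L0, of a] eval_hom_X[OF ring_hom_subst1, of a b]
    eval_hom_X[OF ring_hom_subst2, of a b c]
  by (simp_all add: subst1_def subst2_def subst3_def)

lemma subst4_L:
  "subst4 (L3 r) a b c d = subst3 a b c r" "subst4 (L2 q) a b c d = subst2 a b q"
  "subst4 (L1 e) a b c d = subst1 a e" "subst4 (L0 x) a b c d = L0 x"
  by (simp_all add: subst4_eq_eval_hom L3_def L2_def L1_def L0_def eval_hom_const ring_hom_0
      ring_hom_subst3 subst_const)

lemma subst4_V:
  "subst4 VX a b c d = a" "subst4 VY a b c d = b" "subst4 VZ a b c d = c" "subst4 VW a b c d = d"
  by (simp_all add: VX_def VY_def VZ_def subst4_L subst_X,
      simp add: VW_def subst4_eq_eval_hom eval_hom_X ring_hom_subst3)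

lemma subst4_simps:
  "subst4 (p + q) a b c d = subst4 p a b c d + subst4 q a b c d"
  "subst4 (p * q) a b c d = subst4 p a b c d * subst4 q a b c d"
  "subst4 (p ^ n) a b c d = subst4 p a b c d ^ n"
  by (simp_all add: ring_hom_add[OF ring_hom_subst4] ring_hom_mult[OF ring_hom_subst4]
      ring_hom_power[OF ring_hom_subst4])

lemma L1_eq_subst1: "L1 q = subst1 VX q"
  using ring_hom_eq_eval_hom[OF ring_hom_L1, of q] by (simp add: L_const subst1_def VX_def)

lemma L2_eq_subst2: "L2 q = subst2 VX VY q"
proof -
  have "L2 q = eval_hom (\<lambda>a. L2 [:a:]) (L2 [:0, 1:]) q" by (rule ring_hom_eq_eval_hom[OF ring_hom_L2])
  also have "\<dots> = eval_hom (subst1 VX) VY q" by (simp add: L_const VY_def L1_eq_subst1)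
  finally show ?thesis by (simp add: subst2_def)
qed

lemma L3_eq_subst3: "L3 q = subst3 VX VY VZ q"
proof -
  have "L3 q = eval_hom (\<lambda>a. L3 [:a:]) (L3 [:0, 1:]) q" by (rule ring_hom_eq_eval_hom[OF ring_hom_L3])
  also have "\<dots> = eval_hom (subst2 VX VY) VZ q" by (simp add: L_const VZ_def L2_eq_subst2)
  finally show ?thesis by (simp add: subst3_def)
qed

lemma subst4_vars: "subst4 p VX VY VZ VW = p"
proof -
  have "p = eval_hom (\<lambda>a. [:a:]) [:0, 1:] p"
    using ring_hom_eq_eval_hom[OF ring_hom_id, of p] by simp
  moreover have "(\<lambda>a. [:a:]) = subst3 VX VY VZ"
    by (rule ext) (simp add: L3_eq_subst3[symmetric] L3_def)
  moreover have "[:0, 1:] = (VW :: 'a R4)" by (simp add: VW_def)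
  ultimately show ?thesis unfolding subst4_eq_eval_hom by metis
qed

lemma subst1_VX: "subst1 VX = L1"
  by (rule ext) (simp add: L1_eq_subst1)

lemma subst2_VX_VY: "subst2 VX VY = L2"
  by (rule ext) (simp add: L2_eq_subst2)

lemma subst1_L1: "subst1 (L1 s) e = L1 (pcompose e s)"
proof -
  have "L1 (pcompose e s) = eval_hom (L1 \<circ> (\<lambda>x. [:x:])) (L1 s) e"
    by (simp add: pcompose_eq_eval_hom ring_hom_eval_hom_commute[OF ring_hom_L1 ring_hom_const_poly])
  also have "L1 \<circ> (\<lambda>x. [:x:]) = L0" by (rule ext) (simp add: L_const)
  finally show ?thesis by (simp add: subst1_def)
qed

lemma subst2_VX_L2: "subst2 VX (L2 s) q = L2 (pcompose q s)"
proof -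
  have "L2 (pcompose q s) = eval_hom (L2 \<circ> (\<lambda>x. [:x:])) (L2 s) q"
    by (simp add: pcompose_eq_eval_hom ring_hom_eval_hom_commute[OF ring_hom_L2 ring_hom_const_poly])
  also have "L2 \<circ> (\<lambda>x. [:x:]) = subst1 VX" by (rule ext) (simp add: L_const subst1_VX)
  finally show ?thesis by (simp add: subst2_def)
qed

lemma subst3_VX_L2_L3:
  "subst3 VX (L2 s) (L3 t) r = L3 (pcompose (map_poly (\<lambda>e. pcompose e s) r) t)"
proof -
  have "L3 (pcompose (map_poly (\<lambda>e. pcompose e s) r) t)
      = eval_hom (L3 \<circ> (\<lambda>x. [:x:])) (L3 t) (map_poly (\<lambda>e. pcompose e s) r)"
    by (simp add: pcompose_eq_eval_hom ring_hom_eval_hom_commute[OF ring_hom_L3 ring_hom_const_poly])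
  also have "\<dots> = eval_hom (L3 \<circ> (\<lambda>x. [:x:]) \<circ> (\<lambda>e. pcompose e s)) (L3 t) r"
    by (rule eval_hom_map_poly) (simp_all add: L_simps)
  also have "L3 \<circ> (\<lambda>x. [:x:]) \<circ> (\<lambda>e. pcompose e s) = subst2 VX (L2 s)"
    by (rule ext) (simp add: L_const subst2_VX_L2)
  finally show ?thesis by (simp add: subst3_def)
qed

lemma subst3_VX_VY_L3: "subst3 VX VY (L3 t) r = L3 (pcompose r t)"
  using subst3_VX_L2_L3[of "[:0, 1:]" t r] by (simp add: VY_def[symmetric] map_poly_idI)

lemma L_in_range:
  "L0 c \<in> range L1" "L0 c \<in> range L2" "L0 c \<in> range L3"
  "L1 p \<in> range L2" "L1 p \<in> range L3" "L2 q \<in> range L3"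
  by (metis L_const rangeI)+

lemma vars_in_range:
  "VX \<in> range L1" "VX \<in> range L2" "VX \<in> range L3" "VY \<in> range L2" "VY \<in> range L3" "VZ \<in> range L3"
  by (simp_all add: VX_def VY_def VZ_def L_in_range)

lemma subst1_in_range:
  assumes "ring_hom L" "\<And>c. L0 c \<in> range L" "a \<in> range L"
  shows "subst1 a p \<in> range L"
  unfolding subst1_def using assms by (intro eval_hom_in_range) (simp_all add: L_simps)

lemma subst2_in_range:
  assumes "ring_hom L" "\<And>c. L0 c \<in> range L" "a \<in> range L" "b \<in> range L"
  shows "subst2 a b q \<in> range L"
  unfolding subst2_def using assms
  by (intro eval_hom_in_range subst1_in_range) (simp_all add: ring_hom_0 ring_hom_subst1)

lemma subst3_in_range:
  assumes "ring_hom L" "\<And>c. L0 c \<in> range L" "a \<in> range L" "b \<in> range L" "c \<in> range L"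
  shows "subst3 a b c r \<in> range L"
  unfolding subst3_def using assms
  by (intro eval_hom_in_range subst2_in_range) (simp_all add: ring_hom_0 ring_hom_subst2)

definition kalg_hom :: "('k::comm_ring_1 R4 \<Rightarrow> 'k R4) \<Rightarrow> bool" where
  "kalg_hom T \<longleftrightarrow> ring_hom T \<and> (\<forall>c. T (L0 c) = L0 c)"

lemma kalg_aut_iff: "kalg_aut T \<longleftrightarrow> kalg_hom T \<and> bij T"
  unfolding kalg_aut_def kalg_hom_def ring_hom_def by (metis L_simps(21))

lemma kalg_aut_imp_kalg_hom: "kalg_aut T \<Longrightarrow> kalg_hom T"
  by (simp add: kalg_aut_iff)

lemma kalg_hom_id: "kalg_hom id"
  by (simp add: kalg_hom_def ring_hom_def)

lemma kalg_aut_id: "kalg_aut id"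
  by (simp add: kalg_aut_iff kalg_hom_id)

lemma kalg_hom_comp: "kalg_hom T \<Longrightarrow> kalg_hom T' \<Longrightarrow> kalg_hom (T \<circ> T')"
  by (simp add: kalg_hom_def ring_hom_comp)

lemma kalg_hom_subst4: "kalg_hom (\<lambda>p. subst4 p a b c d)"
  by (simp add: kalg_hom_def ring_hom_subst4 subst4_L)

lemma kalg_hom_subst4_commute:
  assumes "kalg_hom T"
  shows "T (subst4 p a b c d) = subst4 p (T a) (T b) (T c) (T d)"
proof -
  have H: "ring_hom T" and L: "\<And>c. T (L0 c) = L0 c" using assms by (auto simp: kalg_hom_def)
  have 1: "T (subst1 a q) = subst1 (T a) q" for q
    using ring_hom_eval_hom_commute[OF H ring_hom_L0, of a q] by (simp add: subst1_def o_def L)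
  have 2: "T (subst2 a b q) = subst2 (T a) (T b) q" for q
    using ring_hom_eval_hom_commute[OF H ring_hom_subst1, of a b q] by (simp add: subst2_def o_def 1)
  have 3: "T (subst3 a b c q) = subst3 (T a) (T b) (T c) q" for q
    using ring_hom_eval_hom_commute[OF H ring_hom_subst2, of a b c q] by (simp add: subst3_def o_def 2)
  show ?thesis
    using ring_hom_eval_hom_commute[OF H ring_hom_subst3, of a b c d p]
    by (simp add: subst4_eq_eval_hom o_def 3)
qed

lemma kalg_hom_eq_subst4: "kalg_hom T \<Longrightarrow> T p = subst4 p (T VX) (T VY) (T VZ) (T VW)"
  using kalg_hom_subst4_commute[of T p VX VY VZ VW] by (simp add: subst4_vars)

lemma kalg_hom_eqI:
  "kalg_hom T \<Longrightarrow> kalg_hom T' \<Longrightarrow> T VX = T' VX \<Longrightarrow> T VY = T' VY \<Longrightarrow> T VZ = T' VZ \<Longrightarrow>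
   T VW = T' VW \<Longrightarrow> T = T'"
  by (rule ext) (metis kalg_hom_eq_subst4)

lemma kalg_hom_fixes_L1: "kalg_hom T \<Longrightarrow> T VX = VX \<Longrightarrow> T (L1 p) = L1 p"
  using kalg_hom_eq_subst4[of T "L1 p"] by (simp add: subst4_L subst1_VX)

lemma kalg_hom_fixes_L2: "kalg_hom T \<Longrightarrow> T VX = VX \<Longrightarrow> T VY = VY \<Longrightarrow> T (L2 q) = L2 q"
  using kalg_hom_eq_subst4[of T "L2 q"] by (simp add: subst4_L subst2_VX_VY)

lemma kalg_hom_fixes_L3:
  "kalg_hom T \<Longrightarrow> T VX = VX \<Longrightarrow> T VY = VY \<Longrightarrow> T VZ = VZ \<Longrightarrow> T (L3 r) = L3 r"
  using kalg_hom_eq_subst4[of T "L3 r"] by (simp add: subst4_L flip: L3_eq_subst3)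

lemma kalg_aut_of_inverse:
  "kalg_hom \<phi> \<Longrightarrow> kalg_hom \<psi> \<Longrightarrow> \<psi> \<circ> \<phi> = id \<Longrightarrow> \<phi> \<circ> \<psi> = id \<Longrightarrow> kalg_aut \<phi>"
  using o_bij kalg_aut_iff by blast

lemma involution_apply: "involution \<tau> \<Longrightarrow> \<tau> (\<tau> x) = x"
  by (simp add: involution_def pointfree_idE)

lemma kalg_hom_involutionI:
  assumes "kalg_hom T" "T (T VX) = VX" "T (T VY) = VY" "T (T VZ) = VZ" "T (T VW) = VW"
  shows "involution T"
  unfolding involution_def by (rule kalg_hom_eqI) (simp_all add: assms kalg_hom_comp kalg_hom_id)

lemma triangularI:
  assumes "kalg_aut \<tau>" "\<tau> VX = VX + L0 p1" "\<tau> VY = VY + L1 p2" "\<tau> VZ = VZ + L2 p3"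
    "\<tau> VW = VW + L3 p4"
  shows "triangular \<tau>"
  unfolding triangular_def using assms
  by (intro conjI exI[of _ 1] exI[of _ p1] exI[of _ p2] exI[of _ p3] exI[of _ p4]) (simp_all add: L_simps)

section \<open>Characteristic two\<close>

lemma char2_add_self: "(2::'a::comm_ring_1) = 0 \<Longrightarrow> x + x = (0::'a)"
  by (metis mult_2 mult_zero_left)

lemma char2_add_eq_0_iff: "(2::'a::comm_ring_1) = 0 \<Longrightarrow> x + y = 0 \<longleftrightarrow> x = (y::'a)"
  by (metis add_diff_cancel_right' char2_add_self diff_0)

lemma char2_poly: "(2::'a::comm_ring_1) = 0 \<Longrightarrow> (2::'a poly) = 0"
  by (simp add: numeral_poly)

lemma char2_R4: "(2::'k::comm_ring_1) = 0 \<Longrightarrow> (2::'k R4) = 0"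
  by (intro char2_poly)

lemma char2_square_eq_1:
  assumes two: "(2::'k::field) = 0" and "l * l = 1"
  shows "l = (1::'k)"
proof -
  have "(l + 1) * (l + 1) = l * l + 2 * l + 1" by (simp add: algebra_simps)
  also have "\<dots> = 0" using assms char2_add_self[OF two, of 1] by simp
  finally show ?thesis using char2_add_eq_0_iff[OF two] by simp
qed

lemma char2_square_shift:
  fixes z c :: "'a::comm_ring_1"
  assumes "(2::'a) = 0"
  shows "(z + c)\<^sup>2 + c * (z + c) = z\<^sup>2 + c * z"
proof -
  have "(z + c)\<^sup>2 + c * (z + c) = z\<^sup>2 + c * z + 2 * (z * c + c * c)"
    by (simp add: algebra_simps power2_eq_square)
  with assms show ?thesis by simp
qed

lemma char2_shift_involutive_iff:
  assumes two: "(2::'a::comm_ring_1) = 0" and T: "ring_hom T" and v: "T v = v + c"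
  shows "T (T v) = v \<longleftrightarrow> T c = (c::'a)"
proof -
  have "T (T v) = v + (c + T c)" by (simp add: v ring_hom_add[OF T] add.assoc)
  then show ?thesis using char2_add_eq_0_iff[OF two, of c "T c"] by auto
qed

subsection \<open>Polynomials invariant under a translation\<close>

lemma degree_le_1_eq: "degree (g::'a::comm_ring_1 poly) \<le> 1 \<Longrightarrow> g = [:coeff g 0:] + [:0, 1:] * [:coeff g 1:]"
  by (rule poly_eqI) (auto simp: coeff_pCons coeff_eq_0 split: nat.splits)

lemma pcompose_idL: "pcompose [:0, 1:] (q::'a::comm_semiring_1 poly) = q"
  by (simp add: pcompose_pCons)

lemma pcompose_right_inj:
  fixes A B :: "'a::idom poly"
  assumes "degree m > 0" "pcompose A m = pcompose B m"
  shows "A = B"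
  using pcompose_eq_0[of "A - B" m] assms by (simp add: pcompose_diff)

lemma quadratic_decomp_exists:
  fixes g :: "'a::idom poly" and c0 c1 :: 'a
  defines "m \<equiv> [:c0, c1, 1:]"
  shows "\<exists>A B. g = pcompose A m + [:0, 1:] * pcompose B m"
proof (induction "degree g" arbitrary: g rule: less_induct)
  case less
  show ?case
  proof (cases "degree g \<le> 1")
    case True
    then show ?thesis using degree_le_1_eq[OF True]
      by (intro exI[of _ "[:coeff g 0:]"] exI[of _ "[:coeff g 1:]"]) simp
  next
    case False
    have m0: "m \<noteq> 0" and dm: "degree m = 2" and lm: "coeff m (degree m) = 1"
      by (simp_all add: m_def)
    obtain q r where qr: "pseudo_divmod g m = (q, r)" by (cases "pseudo_divmod g m") auto
    from pseudo_divmod[OF m0 qr] lm dm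
    have g: "g = m * q + r" and r: "r = 0 \<or> degree r < 2" by auto
    have dr: "degree r \<le> 1" using r by auto
    have "q \<noteq> 0" using g False dr by auto
    then have dmq: "degree (m * q) = 2 + degree q" using m0 dm by (simp add: degree_mult_eq)
    then have "degree g = degree (m * q)" using dr by (simp add: g degree_add_eq_left)
    with dmq have "degree q < degree g" by simp
    from less(1)[OF this] obtain A B where AB: "q = pcompose A m + [:0, 1:] * pcompose B m"
      by blast
    have "g = pcompose ([:coeff r 0:] + [:0, 1:] * A) m + [:0, 1:] * pcompose ([:coeff r 1:] + [:0, 1:] * B) m"
      apply (subst g, subst degree_le_1_eq[OF dr], subst AB)
      apply (simp only: pcompose_add pcompose_mult pcompose_idL pcompose_const)
      by (simp add: algebra_simps)
    then show ?thesis by blast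
  qed
qed

lemma quadratic_decomp_unique:
  fixes A B :: "'a::idom poly"
  assumes dm: "degree m = 2" and eq: "pcompose A m + [:0, 1:] * pcompose B m = 0"
  shows "A = 0 \<and> B = 0"
proof -
  have "B = 0"
  proof (rule ccontr)
    assume "B \<noteq> 0"
    then have "pcompose B m \<noteq> 0" using pcompose_eq_0_iff[of m B] dm by simp
    then have d1: "degree ([:0, 1:] * pcompose B m) = 1 + 2 * degree B"
      using dm by (simp add: degree_mult_eq degree_pcompose)
    have "pcompose A m = - ([:0, 1:] * pcompose B m)" using eq eq_neg_iff_add_eq_0 by blast
    then have "degree (pcompose A m) = 1 + 2 * degree B" using d1 by (metis degree_minus)
    moreover have "degree (pcompose A m) = 2 * degree A" using dm by (simp add: degree_pcompose)
    ultimately show False by presburger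
  qed
  with eq dm show ?thesis using pcompose_eq_0_iff[of m A] by simp
qed

lemma char2_quadratic_shift:
  fixes \<xi> :: "'a::comm_ring_1"
  assumes "(2::'a) = 0"
  shows "pcompose [:0, \<xi>, 1:] [:\<xi>, 1:] = [:0, \<xi>, 1:]"
proof -
  have "pcompose [:0, \<xi>, 1:] [:\<xi>, 1:] = [:\<xi> * \<xi> + \<xi> * \<xi>, \<xi> + (\<xi> + \<xi>), 1:]"
    by (simp add: pcompose_pCons algebra_simps)
  then show ?thesis using char2_add_self[OF assms] by simp
qed

lemma char2_quadratic_decomp_shift:
  fixes \<xi> :: "'a::comm_ring_1"
  assumes "(2::'a) = 0"
  shows "pcompose (pcompose A [:0, \<xi>, 1:] + [:0, 1:] * pcompose B [:0, \<xi>, 1:]) [:\<xi>, 1:]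
    = pcompose A [:0, \<xi>, 1:] + [:\<xi>, 1:] * pcompose B [:0, \<xi>, 1:]"
  by (simp only: pcompose_add pcompose_mult pcompose_idL char2_quadratic_shift[OF assms]
      flip: pcompose_assoc)

lemma char2_shift_invariant:
  fixes g :: "'a::idom poly"
  assumes two: "(2::'a) = 0" and \<xi>: "\<xi> \<noteq> 0" and inv: "pcompose g [:\<xi>, 1:] = g"
  shows "\<exists>A. g = pcompose A [:0, \<xi>, 1:]"
proof -
  let ?m = "[:0, \<xi>, 1:]"
  obtain A B where g: "g = pcompose A ?m + [:0, 1:] * pcompose B ?m"
    using quadratic_decomp_exists by blast
  with inv have "pcompose A ?m + [:\<xi>, 1:] * pcompose B ?m = pcompose A ?m + [:0, 1:] * pcompose B ?m"
    using char2_quadratic_decomp_shift[OF two] by metis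
  then have "[:\<xi>:] * pcompose B ?m = 0" by (simp add: algebra_simps)
  then have "B = 0" using \<xi> pcompose_eq_0_iff[of ?m B] by simp
  with g show ?thesis by auto
qed

lemma dvd_const_poly_imp_const:
  fixes a :: "'a::idom poly"
  assumes "a dvd [:c:]" "c \<noteq> 0"
  shows "\<exists>a0. a = [:a0:]"
proof -
  have "degree a = 0" using dvd_imp_degree_le[OF assms(1)] assms(2) by simp
  then show ?thesis by (metis degree_eq_zeroE)
qed

section \<open>Greatest common divisors in \<open>k[x, y]\<close>\<close>

text \<open>
  A bare field carries no gcd instance, so \<open>k[x, y]\<close> has no \<open>gcd\<close> operation. The type
  \<open>'a gcd_field\<close> is a copy of the field \<open>'a\<close> with the trivial Euclidean structure, as the library
  provides for \<open>real\<close>; then \<open>'a gcd_field poly poly\<close> is a gcd ring, and divisibility transfers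
  back along the ring isomorphism \<open>Psi\<close>.
\<close>

typedef 'a gcd_field = "UNIV :: 'a::field set" morphisms of_gcd_field to_gcd_field by simp

lemma of_to_gcd_field[simp]: "of_gcd_field (to_gcd_field x) = x"
  by (simp add: to_gcd_field_inverse)

lemma gcd_field_eq_iff: "x = y \<longleftrightarrow> of_gcd_field x = of_gcd_field y"
  by (simp add: of_gcd_field_inject)

instantiation gcd_field :: (field) field
begin
definition "0 = to_gcd_field 0"
definition "1 = to_gcd_field 1"
definition "x + y = to_gcd_field (of_gcd_field x + of_gcd_field y)"
definition "x - y = to_gcd_field (of_gcd_field x - of_gcd_field y)"
definition "- x = to_gcd_field (- of_gcd_field x)"
definition "x * y = to_gcd_field (of_gcd_field x * of_gcd_field y)"
definition "inverse x = to_gcd_field (inverse (of_gcd_field x))"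
definition "x div y = to_gcd_field (of_gcd_field x / of_gcd_field y)"
instance
  by standard
    (simp_all add: gcd_field_eq_iff zero_gcd_field_def one_gcd_field_def plus_gcd_field_def
      minus_gcd_field_def uminus_gcd_field_def times_gcd_field_def inverse_gcd_field_def
      divide_gcd_field_def algebra_simps divide_inverse)

end

lemma of_gcd_field_ops[simp]:
  "of_gcd_field 0 = 0" "of_gcd_field 1 = 1"
  "of_gcd_field (x + y) = of_gcd_field x + of_gcd_field y"
  "of_gcd_field (x * y) = of_gcd_field x * of_gcd_field y"
  by (simp_all add: zero_gcd_field_def one_gcd_field_def plus_gcd_field_def times_gcd_field_def)

lemma to_gcd_field_ops:
  "to_gcd_field 0 = 0" "to_gcd_field 1 = 1"
  "to_gcd_field (x + y) = to_gcd_field x + to_gcd_field y"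
  "to_gcd_field (x * y) = to_gcd_field x * to_gcd_field y"
  by (simp_all add: zero_gcd_field_def one_gcd_field_def plus_gcd_field_def times_gcd_field_def)

instantiation gcd_field :: (field)
  "{unique_euclidean_ring, normalization_euclidean_semiring, normalization_semidom_multiplicative}"
begin
definition [simp]: "normalize_gcd_field = (normalize_field :: 'a gcd_field \<Rightarrow> _)"
definition [simp]: "unit_factor_gcd_field = (unit_factor_field :: 'a gcd_field \<Rightarrow> _)"
definition [simp]: "modulo_gcd_field = (mod_field :: 'a gcd_field \<Rightarrow> _)"
definition [simp]: "euclidean_size_gcd_field = (euclidean_size_field :: 'a gcd_field \<Rightarrow> _)"
definition [simp]: "division_segment (x :: 'a gcd_field) = 1"
instance
  by standard
    (simp_all add: dvd_field_iff field_split_simps split: if_splits)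

end

instantiation gcd_field :: (field) euclidean_ring_gcd
begin
definition gcd_gcd_field :: "'a gcd_field \<Rightarrow> 'a gcd_field \<Rightarrow> 'a gcd_field" where
  "gcd_gcd_field = Euclidean_Algorithm.gcd"
definition lcm_gcd_field :: "'a gcd_field \<Rightarrow> 'a gcd_field \<Rightarrow> 'a gcd_field" where
  "lcm_gcd_field = Euclidean_Algorithm.lcm"
definition Gcd_gcd_field :: "'a gcd_field set \<Rightarrow> 'a gcd_field" where
  "Gcd_gcd_field = Euclidean_Algorithm.Gcd"
definition Lcm_gcd_field :: "'a gcd_field set \<Rightarrow> 'a gcd_field" where
  "Lcm_gcd_field = Euclidean_Algorithm.Lcm"
instance by standard (simp_all add: gcd_gcd_field_def lcm_gcd_field_def Gcd_gcd_field_def Lcm_gcd_field_def)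

end

instance gcd_field :: (field) field_gcd ..

lemma ring_hom_to_gcd_field: "ring_hom to_gcd_field"
  by (simp add: ring_hom_def to_gcd_field_ops)

lemma ring_hom_of_gcd_field: "ring_hom of_gcd_field"
  by (simp add: ring_hom_def)

definition Phi :: "'k::field poly poly \<Rightarrow> 'k gcd_field poly poly" where
  "Phi = map_poly (map_poly to_gcd_field)"

definition Psi :: "'k::field gcd_field poly poly \<Rightarrow> 'k poly poly" where
  "Psi = map_poly (map_poly of_gcd_field)"

lemma ring_hom_Phi: "ring_hom Phi"
  unfolding Phi_def by (intro ring_hom_map_poly ring_hom_to_gcd_field)

lemma ring_hom_Psi: "ring_hom Psi"
  unfolding Psi_def by (intro ring_hom_map_poly ring_hom_of_gcd_field)

lemma Psi_Phi[simp]: "Psi (Phi p) = p"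
  by (simp add: Psi_def Phi_def map_poly_map_poly to_gcd_field_ops o_def map_poly_idI)

lemma Phi_Psi[simp]: "Phi (Psi p) = p"
  by (simp add: Psi_def Phi_def map_poly_map_poly to_gcd_field_ops o_def map_poly_idI of_gcd_field_inverse)

lemma Phi_dvd_iff: "Phi p dvd Phi q \<longleftrightarrow> p dvd q"
proof
  assume "Phi p dvd Phi q"
  then obtain k where "Phi q = Phi p * k" by (auto elim: dvdE)
  then have "Psi (Phi q) = Psi (Phi p) * Psi k" by (simp add: ring_hom_mult[OF ring_hom_Psi])
  then show "p dvd q" by simp
next
  assume "p dvd q"
  then show "Phi p dvd Phi q" by (auto simp: ring_hom_mult[OF ring_hom_Phi] elim!: dvdE)
qed

lemma is_gcd_exists: "\<exists>d. is_gcd d (P::'k::field poly poly) Q"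
proof -
  let ?d = "Psi (gcd (Phi P) (Phi Q))"
  have "is_gcd ?d P Q"
    unfolding is_gcd_def
  proof (intro conjI allI impI)
    have "Phi ?d dvd Phi P" "Phi ?d dvd Phi Q" by simp_all
    then show "?d dvd P" "?d dvd Q" by (simp_all only: Phi_dvd_iff)
    fix e assume "e dvd P \<and> e dvd Q"
    then have "Phi e dvd Phi P" "Phi e dvd Phi Q" by (simp_all only: Phi_dvd_iff)
    then have "Phi e dvd Phi ?d" by simp
    then show "e dvd ?d" by (simp only: Phi_dvd_iff)
  qed
  then show ?thesis by blast
qed

lemma is_gcd_cofactor_dvd:
  fixes d a b E :: "'k::field poly poly"
  assumes g: "is_gcd d (d * a) (d * b)" and d0: "d \<noteq> 0" and dvd: "a dvd b * E"
  shows "a dvd E"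
proof -
  have unit: "is_unit e" if "e dvd a" "e dvd b" for e
  proof -
    have "e * d dvd d * a" "e * d dvd d * b"
      using mult_dvd_mono[OF that(1) dvd_refl[of d]] mult_dvd_mono[OF that(2) dvd_refl[of d]]
      by (simp_all only: mult.commute[of _ d])
    then have "e * d dvd d" using g unfolding is_gcd_def by blast
    then have "e * d dvd 1 * d" by simp
    then show ?thesis using dvd_times_right_cancel_iff[OF d0] by blast
  qed
  have "coprime (Phi a) (Phi b)"
  proof (rule coprimeI)
    fix c assume "c dvd Phi a" "c dvd Phi b"
    then have "Phi (Psi c) dvd Phi a" "Phi (Psi c) dvd Phi b" by simp_all
    then have "Psi c dvd a" "Psi c dvd b" by (simp_all only: Phi_dvd_iff)
    then have "is_unit (Psi c)" by (rule unit)
    then have "Phi (Psi c) dvd Phi 1" by (simp only: Phi_dvd_iff)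
    then show "is_unit c" by (simp add: ring_hom_1[OF ring_hom_Phi])
  qed
  moreover have "Phi a dvd Phi b * Phi E"
    using dvd by (simp only: Phi_dvd_iff flip: ring_hom_mult[OF ring_hom_Phi])
  ultimately have "Phi a dvd Phi E" by (simp add: coprime_dvd_mult_right_iff)
  then show ?thesis by (simp add: Phi_dvd_iff)
qed

section \<open>The invariants of form (iii)\<close>

lemma is_gcd_cross_mult:
  fixes d a b E Q P R :: "'k::field poly poly"
  assumes g: "is_gcd d P R" and da: "P = d * a" and db: "R = d * b" and P: "P \<noteq> 0"
    and eq: "P * Q = R * E"
  shows "\<exists>C. E = a * C \<and> Q = b * C"
proof -
  have d0: "d \<noteq> 0" and a0: "a \<noteq> 0" using da P by auto
  have "d * (a * Q) = d * (b * E)" using eq by (simp add: da db algebra_simps)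
  then have eq': "a * Q = b * E" using d0 by simp
  have "a dvd E"
    using is_gcd_cofactor_dvd[of d a b E] g da db d0 eq' by (metis dvdI)
  then obtain C where C: "E = a * C" by (auto elim: dvdE)
  with eq' have "Q = b * C" using a0 by (simp add: algebra_simps)
  with C show ?thesis by blast
qed

lemma invariant_coeff_decomp:
  fixes \<alpha> :: "'k::field poly" and \<beta> d a b g0 g1 :: "'k poly poly"
  assumes two: "(2::'k) = 0" and \<alpha>: "\<alpha> \<noteq> 0"
    and g: "is_gcd d [:\<alpha>:] \<beta>" and da: "[:\<alpha>:] = d * a" and db: "\<beta> = d * b"
    and inv1: "pcompose g1 [:\<alpha>, 1:] = g1"
    and inv0: "g0 + pcompose g0 [:\<alpha>, 1:] = pcompose \<beta> [:0, \<alpha>, 1:] * g1"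
  shows "\<exists>G0 C. g1 = a * pcompose C [:0, \<alpha>, 1:] \<and>
     g0 = pcompose G0 [:0, \<alpha>, 1:] + [:0, 1:] * pcompose b [:0, \<alpha>, 1:] * pcompose C [:0, \<alpha>, 1:]"
proof -
  let ?f = "[:0, \<alpha>, 1:] :: 'k poly poly"
  have two1: "(2::'k poly) = 0" using two by (rule char2_poly)
  have two2: "(2::'k poly poly) = 0" using two1 by (rule char2_poly)
  obtain E where E: "g1 = pcompose E ?f" using char2_shift_invariant[OF two1 \<alpha> inv1] by blast
  obtain P Q where PQ: "g0 = pcompose P ?f + [:0, 1:] * pcompose Q ?f"
    using quadratic_decomp_exists[of g0 0 \<alpha>] by blast
  have "pcompose g0 [:\<alpha>, 1:] = pcompose P ?f + [:\<alpha>, 1:] * pcompose Q ?f"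
    unfolding PQ by (rule char2_quadratic_decomp_shift[OF two1])
  then have "g0 + pcompose g0 [:\<alpha>, 1:]
      = (pcompose P ?f + pcompose P ?f) + ([:0, 1:] + [:\<alpha>, 1:]) * pcompose Q ?f"
    by (simp only: PQ algebra_simps)
  also have "pcompose P ?f + pcompose P ?f = 0" by (rule char2_add_self[OF two2])
  also have "[:0, 1:] + [:\<alpha>, 1:] = [:\<alpha>:]" using char2_add_self[OF two1, of 1] by simp
  finally have "pcompose ([:\<alpha>:] * Q) ?f = pcompose (\<beta> * E) ?f"
    using inv0 by (simp add: E pcompose_mult pcompose_smult)
  then have "[:\<alpha>:] * Q = \<beta> * E" by (rule pcompose_right_inj[rotated]) simp
  then obtain C where C: "E = a * C" "Q = b * C"
    using is_gcd_cross_mult[OF g da db] \<alpha> by auto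
  obtain a0 where "a = [:a0:]" using dvd_const_poly_imp_const[of a \<alpha>] da \<alpha> by auto
  then have "g1 = a * pcompose C ?f" by (simp add: E C pcompose_mult pcompose_smult)
  moreover have "g0 = pcompose P ?f + [:0, 1:] * pcompose b ?f * pcompose C ?f"
    by (simp add: PQ C pcompose_mult algebra_simps)
  ultimately show ?thesis by blast
qed

lemma invariant_coeffs_decomp:
  fixes \<alpha> :: "'k::field poly" and \<beta> d a b :: "'k poly poly" and A A' :: "'k poly poly poly"
  assumes two: "(2::'k) = 0" and \<alpha>: "\<alpha> \<noteq> 0"
    and g: "is_gcd d [:\<alpha>:] \<beta>" and da: "[:\<alpha>:] = d * a" and db: "\<beta> = d * b"
  shows "map_poly (\<lambda>e. pcompose e [:\<alpha>, 1:]) A' = A' \<Longrightarrow>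
     A + map_poly (\<lambda>e. pcompose e [:\<alpha>, 1:]) A = smult (pcompose \<beta> [:0, \<alpha>, 1:]) A' \<Longrightarrow>
     \<exists>G0 G1. A' = smult a (map_poly (\<lambda>e. pcompose e [:0, \<alpha>, 1:]) G1) \<and>
       A = map_poly (\<lambda>e. pcompose e [:0, \<alpha>, 1:]) G0 +
           smult ([:0, 1:] * pcompose b [:0, \<alpha>, 1:]) (map_poly (\<lambda>e. pcompose e [:0, \<alpha>, 1:]) G1)"
proof (induction A A' rule: poly_induct2)
  case 0
  show ?case by (intro exI[of _ 0]) simp
next
  case (pCons x A y A')
  let ?s = "\<lambda>e. pcompose e [:\<alpha>, 1:]" and ?g = "\<lambda>e. pcompose e [:0, \<alpha>, 1:]"
  have s0: "?s 0 = 0" and g0: "?g 0 = 0" by simp_all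
  from pCons.prems(1) have y: "?s y = y" and A': "map_poly ?s A' = A'"
    by (simp_all add: map_poly_pCons[of ?s, OF s0])
  from pCons.prems(2) have x: "x + ?s x = pcompose \<beta> [:0, \<alpha>, 1:] * y"
    and A: "A + map_poly ?s A = smult (pcompose \<beta> [:0, \<alpha>, 1:]) A'"
    by (simp_all add: map_poly_pCons[of ?s, OF s0])
  obtain E0 C where EC: "y = a * ?g C" "x = ?g E0 + [:0, 1:] * ?g b * ?g C"
    using invariant_coeff_decomp[OF two \<alpha> g da db y x] by blast
  obtain G0 G1 where G: "A' = smult a (map_poly ?g G1)"
    "A = map_poly ?g G0 + smult ([:0, 1:] * ?g b) (map_poly ?g G1)"
    using pCons.IH[OF A' A] by blast
  show ?case
    by (intro exI[of _ "pCons E0 G0"] exI[of _ "pCons C G1"])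
       (simp add: map_poly_pCons[of ?g, OF g0] EC G algebra_simps)
qed

lemma char2_twisted_shift_invariant:
  fixes s :: "'a::idom \<Rightarrow> 'a" and r :: "'a poly"
  assumes two: "(2::'a) = 0" and s: "ring_hom s" "s B = B"
    and inv: "pcompose (map_poly s r) [:B, 1:] = r"
  shows "\<exists>A A'. r = pcompose A [:0, B, 1:] + [:0, 1:] * pcompose A' [:0, B, 1:] \<and>
    map_poly s A' = A' \<and> A + map_poly s A = smult B A'"
proof -
  let ?m = "[:0, B, 1:]" and ?S = "map_poly s"
  have two1: "(2::'a poly) = 0" using two by (rule char2_poly)
  have S: "ring_hom ?S" by (rule ring_hom_map_poly[OF s(1)])
  have Sm: "?S ?m = ?m" and SX: "?S [:0, 1:] = [:0, 1:]"
    using s by (simp_all add: map_poly_pCons ring_hom_0 ring_hom_1)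
  obtain A A' where r: "r = pcompose A ?m + [:0, 1:] * pcompose A' ?m"
    using quadratic_decomp_exists[of r 0 B] by blast
  have "?S r = pcompose (?S A) ?m + [:0, 1:] * pcompose (?S A') ?m"
    by (simp only: r ring_hom_add[OF S] ring_hom_mult[OF S] map_poly_pcompose[OF s(1)] Sm SX)
  then have "pcompose (?S r) [:B, 1:] = pcompose (?S A) ?m + [:B, 1:] * pcompose (?S A') ?m"
    by (simp only: char2_quadratic_decomp_shift[OF two])
  also have "\<dots> = pcompose (?S A + smult B (?S A')) ?m + [:0, 1:] * pcompose (?S A') ?m"
    by (simp add: pcompose_add pcompose_smult algebra_simps)
  finally have "pcompose (?S A + smult B (?S A')) ?m + [:0, 1:] * pcompose (?S A') ?m
      = pcompose A ?m + [:0, 1:] * pcompose A' ?m"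
    using inv r by metis
  then have "pcompose (?S A + smult B (?S A') - A) ?m + [:0, 1:] * pcompose (?S A' - A') ?m = 0"
    by (simp only: pcompose_diff right_diff_distrib add_diff_add[symmetric] diff_self)
  then have "?S A + smult B (?S A') - A = 0 \<and> ?S A' - A' = 0"
    by (intro quadratic_decomp_unique[of ?m]) simp_all
  then have SA': "?S A' = A'" and "A = ?S A + smult B A'" by auto
  then have "A + ?S A = smult B A' + (?S A + ?S A)" by (simp add: algebra_simps)
  with SA' r show ?thesis using char2_add_self[OF two1, of "?S A"] by auto
qed

lemma invariant_decomp:
  fixes \<alpha> :: "'k::field poly" and \<beta> d a b :: "'k poly poly" and r :: "'k poly poly poly"
  defines "f \<equiv> [:0, \<alpha>, 1:]"
  assumes two: "(2::'k) = 0" and \<alpha>: "\<alpha> \<noteq> 0"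
    and g: "is_gcd d [:\<alpha>:] \<beta>" and da: "[:\<alpha>:] = d * a" and db: "\<beta> = d * b"
    and inv: "pcompose (map_poly (\<lambda>e. pcompose e [:\<alpha>, 1:]) r) [:pcompose \<beta> f, 1:] = r"
  shows "\<exists>G0 G1. r = pcompose (map_poly (\<lambda>e. pcompose e f) G0) [:0, pcompose \<beta> f, 1:]
     + pcompose (map_poly (\<lambda>e. pcompose e f) G1) [:0, pcompose \<beta> f, 1:]
       * [:[:0, 1:] * pcompose b f, a:]"
proof -
  let ?g = "\<lambda>e. pcompose e f" and ?m = "[:0, pcompose \<beta> f, 1:]"
  have two1: "(2::'k poly) = 0" using two by (rule char2_poly)
  have "pcompose (pcompose \<beta> f) [:\<alpha>, 1:] = pcompose \<beta> f"
    by (simp only: f_def char2_quadratic_shift[OF two1] flip: pcompose_assoc)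
  with ring_hom_pcompose_left obtain A A' where r: "r = pcompose A ?m + [:0, 1:] * pcompose A' ?m"
    and "map_poly (\<lambda>e. pcompose e [:\<alpha>, 1:]) A' = A'"
      "A + map_poly (\<lambda>e. pcompose e [:\<alpha>, 1:]) A = smult (pcompose \<beta> f) A'"
    using char2_twisted_shift_invariant[OF char2_poly[OF two1] _ _ inv] by blast
  then obtain G0 G1 where G: "A' = smult a (map_poly ?g G1)"
       "A = map_poly ?g G0 + smult ([:0, 1:] * ?g b) (map_poly ?g G1)"
    using invariant_coeffs_decomp[OF two \<alpha> g da db] unfolding f_def by blast
  have "Q * [:u, a:] = smult u Q + [:0, 1:] * smult a Q" for Q :: "'k poly poly poly" and u
    by (simp add: mult_pCons_right)
  then have "r = pcompose (map_poly ?g G0) ?m + pcompose (map_poly ?g G1) ?m * [:[:0, 1:] * ?g b, a:]"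
    unfolding r G by (simp only: pcompose_add pcompose_smult add.assoc)
  then show ?thesis by blast
qed

section \<open>The three forms are involutions\<close>

lemma char2_fixes_quadratic:
  assumes two: "(2::'a::comm_ring_1) = 0" and T: "ring_hom T" and "T z = z + c" "T c = c"
  shows "T (z\<^sup>2 + c * z) = z\<^sup>2 + c * (z::'a)"
  using assms char2_square_shift[OF two, of z c]
  by (simp add: ring_hom_add[OF T] ring_hom_mult[OF T] ring_hom_power[OF T])

lemma char2_fixes_cross_term:
  assumes two: "(2::'a::comm_ring_1) = 0" and T: "ring_hom T"
    and "T z = z + d * c" "T y = y + d * a" "T a = a" "T c = c"
  shows "T (a * z + c * y) = a * z + c * (y::'a)"
proof -
  have "T (a * z + c * y) = a * z + c * y + (a * d * c + a * d * c)"
    using assms by (simp add: ring_hom_add[OF T] ring_hom_mult[OF T] algebra_simps)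
  then show ?thesis using char2_add_self[OF two, of "a * d * c"] by simp
qed

lemma char2_translation_involutionI:
  assumes two: "(2::'k::comm_ring_1) = 0" and T: "kalg_hom (T :: 'k R4 \<Rightarrow> 'k R4)"
    and "T VX = VX + cx" "T cx = cx" "T VY = VY + cy" "T cy = cy"
    and "T VZ = VZ + cz" "T cz = cz" "T VW = VW + cw" "T cw = cw"
  shows "involution T"
proof -
  have "ring_hom T" using T by (simp add: kalg_hom_def)
  note twice = char2_shift_involutive_iff[OF char2_R4[OF two] this]
  show ?thesis
    using twice[OF assms(3)] twice[OF assms(5)] twice[OF assms(7)] twice[OF assms(9)] assms(4,6,8,10)
    by (intro kalg_hom_involutionI[OF T]) blast+
qed

lemma form_i_involution:
  assumes two: "(2::'k::field) = 0" and T: "kalg_hom (T :: 'k R4 \<Rightarrow> 'k R4)" and "form_i T"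
  shows "involution T"
proof -
  obtain f where h: "T VX = VX" "T VY = VY" "T VZ = VZ" "T VW = VW + L3 f"
    using assms(3) by (auto simp: form_i_def)
  have "T 0 = 0" using T by (simp add: kalg_hom_def ring_hom_0)
  with h show ?thesis
    by (intro char2_translation_involutionI[OF two T, of 0 0 0 "L3 f"]) (simp_all add: kalg_hom_fixes_L3[OF T])
qed

lemma form_ii_involution:
  assumes two: "(2::'k::field) = 0" and T: "kalg_hom (T :: 'k R4 \<Rightarrow> 'k R4)" and "form_ii T"
  shows "involution T"
proof -
  obtain \<xi> \<eta> where h: "T VX = VX" "T VY = VY" "T VZ = VZ + L2 \<xi>"
      "T VW = VW + subst4 (L3 \<eta>) VX VY (VZ\<^sup>2 + L2 \<xi> * VZ) VW"
    using assms(3) by (auto simp: form_ii_def)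
  have \<xi>: "T (L2 \<xi>) = L2 \<xi>" by (rule kalg_hom_fixes_L2[OF T h(1,2)])
  have "T (VZ\<^sup>2 + L2 \<xi> * VZ) = VZ\<^sup>2 + L2 \<xi> * VZ"
    using T h(3) \<xi> by (intro char2_fixes_quadratic[OF char2_R4[OF two]]) (simp_all add: kalg_hom_def)
  then have \<eta>: "T (subst4 (L3 \<eta>) VX VY (VZ\<^sup>2 + L2 \<xi> * VZ) VW) = subst4 (L3 \<eta>) VX VY (VZ\<^sup>2 + L2 \<xi> * VZ) VW"
    by (simp only: kalg_hom_subst4_commute[OF T] h(1,2), simp only: subst4_L)
  have "T 0 = 0" using T by (simp add: kalg_hom_def ring_hom_0)
  with h show ?thesis by (intro char2_translation_involutionI[where cx = 0 and cy = 0, OF two T _ _ _ _ h(3) \<xi> h(4) \<eta>])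
      simp_all
qed

lemma form_iii_involution:
  assumes two: "(2::'k::field) = 0" and T: "kalg_hom (T :: 'k R4 \<Rightarrow> 'k R4)" and "form_iii T"
  shows "involution T"
proof -
  have hT: "ring_hom T" using T by (simp add: kalg_hom_def)
  obtain \<alpha> \<beta> \<gamma> d a b where
    \<alpha>\<beta>: "\<alpha> \<noteq> 0" "is_gcd d [:\<alpha>:] \<beta>" "[:\<alpha>:] = d * a" "\<beta> = d * b"
    and h: "T VX = VX" "T VY = VY + subst4 (L1 \<alpha>) VX VY VZ VW"
      "T VZ = VZ + subst4 (L2 \<beta>) VX (VY\<^sup>2 + L1 \<alpha> * VY) VZ VW"
      "T VW = VW + subst4 \<gamma> VX (VY\<^sup>2 + L1 \<alpha> * VY)
          (VZ\<^sup>2 + subst4 (L2 \<beta>) VX (VY\<^sup>2 + L1 \<alpha> * VY) VZ VW * VZ)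
          (L2 a * VZ + subst4 (L2 b) VX (VY\<^sup>2 + L1 \<alpha> * VY) VZ VW * VY)"
    using assms(3) unfolding form_iii_def Let_def by blast
  define f2 where "f2 = VY\<^sup>2 + L1 \<alpha> * VY"
  define B where "B = subst4 (L2 \<beta>) VX f2 VZ VW"
  define C where "C = subst4 (L2 b) VX f2 VZ VW"
  define f3 where "f3 = VZ\<^sup>2 + B * VZ"
  define f4 where "f4 = L2 a * VZ + C * VY"
  have hY: "T VY = VY + L1 \<alpha>" using h(2) by (simp add: subst4_L subst1_VX)
  have \<alpha>T: "T (L1 \<alpha>) = L1 \<alpha>" by (rule kalg_hom_fixes_L1[OF T h(1)])
  have f2: "T f2 = f2" unfolding f2_def by (rule char2_fixes_quadratic[OF char2_R4[OF two] hT hY \<alpha>T])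
  have BT: "T B = B" and CT: "T C = C" unfolding B_def C_def
    by (simp_all only: kalg_hom_subst4_commute[OF T] h(1) f2, simp_all only: subst4_L)
  have hZ: "T VZ = VZ + B" using h(3) by (simp add: B_def f2_def)
  have f3: "T f3 = f3" unfolding f3_def by (rule char2_fixes_quadratic[OF char2_R4[OF two] hT hZ BT])
  obtain d0 where d0: "d = [:d0:]" using dvd_const_poly_imp_const[of d \<alpha>] \<alpha>\<beta>(1,3) by (metis dvd_triv_left)
  obtain a0 where a0: "a = [:a0:]" using dvd_const_poly_imp_const[of a \<alpha>] \<alpha>\<beta>(1,3) by (metis dvd_triv_right)
  have aT: "T (L2 a) = L2 a" using kalg_hom_fixes_L1[OF T h(1), of a0] by (simp add: a0 L_const)
  have "B = subst4 (L2 d) VX f2 VZ VW * C" unfolding B_def C_def \<alpha>\<beta>(4) L_simps subst4_simps ..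
  then have "B = L2 d * C" by (simp add: d0 subst4_L subst_const subst1_VX L_const)
  moreover have "L1 \<alpha> = L2 d * L2 a" by (simp flip: L_const L_simps add: \<alpha>\<beta>(3))
  ultimately have f4: "T f4 = f4" unfolding f4_def
    using hZ hY aT CT by (intro char2_fixes_cross_term[where d = "L2 d", OF char2_R4[OF two] hT]) simp_all
  have "T (subst4 \<gamma> VX f2 f3 f4) = subst4 \<gamma> VX f2 f3 f4"
    by (simp only: kalg_hom_subst4_commute[OF T] h(1) f2 f3 f4)
  moreover have "T VW = VW + subst4 \<gamma> VX f2 f3 f4"
    using h(4) by (simp add: f2_def f3_def f4_def B_def C_def)
  moreover have "T 0 = 0" using hT by (rule ring_hom_0)
  ultimately show ?thesis using h(1)
    by (intro char2_translation_involutionI[where cx = 0, OF two T _ _ hY \<alpha>T hZ BT]) simp_all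
qed

lemma standard_form_involution:
  assumes "(2::'k::field) = 0" "kalg_hom (T :: 'k R4 \<Rightarrow> 'k R4)" "form_i T \<or> form_ii T \<or> form_iii T"
  shows "involution T"
  using form_i_involution form_ii_involution form_iii_involution assms by blast

section \<open>Normal forms of triangular involutions\<close>

definition conj_to_standard :: "('k::field R4 \<Rightarrow> 'k R4) \<Rightarrow> bool" where
  "conj_to_standard \<tau> \<longleftrightarrow> (\<exists>\<phi> T. kalg_aut \<phi> \<and> triangular T \<and> (form_i T \<or> form_ii T \<or> form_iii T) \<and>
     \<tau> = \<phi> \<circ> T \<circ> inv \<phi>)"

lemma conj_to_standard_self:
  "triangular T \<Longrightarrow> form_i T \<or> form_ii T \<or> form_iii T \<Longrightarrow> conj_to_standard T"
  unfolding conj_to_standard_def by (intro exI[of _ id] exI[of _ T]) (simp add: kalg_aut_id)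

lemma conj_to_standard_of_conj:
  assumes \<phi>: "kalg_aut \<phi>" and \<psi>\<phi>: "\<psi> \<circ> \<phi> = id" and \<phi>\<psi>: "\<phi> \<circ> \<psi> = id"
    and "conj_to_standard (\<psi> \<circ> \<tau> \<circ> \<phi>)"
  shows "conj_to_standard \<tau>"
proof -
  obtain \<chi> T where h: "kalg_aut \<chi>" "triangular T" "form_i T \<or> form_ii T \<or> form_iii T"
    "\<psi> \<circ> \<tau> \<circ> \<phi> = \<chi> \<circ> T \<circ> inv \<chi>"
    using assms(4) unfolding conj_to_standard_def by blast
  have bij: "bij \<phi>" "bij \<chi>" using \<phi> h(1) by (simp_all add: kalg_aut_iff)
  have "inv \<phi> = \<psi>" using \<phi>\<psi> \<psi>\<phi> by (rule inv_unique_comp)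
  have "\<phi> (\<psi> x) = x" for x using \<phi>\<psi> by (rule pointfree_idE)
  then have "\<tau> = \<phi> \<circ> (\<psi> \<circ> \<tau> \<circ> \<phi>) \<circ> \<psi>" by (simp add: fun_eq_iff)
  also have "\<dots> = \<phi> \<circ> (\<chi> \<circ> T \<circ> inv \<chi>) \<circ> \<psi>" by (simp only: h(4))
  also have "\<dots> = (\<phi> \<circ> \<chi>) \<circ> T \<circ> inv (\<phi> \<circ> \<chi>)"
    by (simp add: o_inv_distrib bij \<open>inv \<phi> = \<psi>\<close> comp_assoc)
  finally have "\<tau> = (\<phi> \<circ> \<chi>) \<circ> T \<circ> inv (\<phi> \<circ> \<chi>)" .
  moreover have "kalg_aut (\<phi> \<circ> \<chi>)"
    using \<phi> h(1) by (simp add: kalg_aut_iff kalg_hom_comp bij_comp)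
  ultimately show ?thesis using h(2,3) unfolding conj_to_standard_def by blast
qed

lemma conj_to_standard_involution:
  assumes two: "(2::'k::field) = 0" and "conj_to_standard (\<tau> :: 'k R4 \<Rightarrow> 'k R4)"
  shows "involution \<tau>"
proof -
  obtain \<phi> T where h: "kalg_aut \<phi>" "triangular T" "form_i T \<or> form_ii T \<or> form_iii T"
    "\<tau> = \<phi> \<circ> T \<circ> inv \<phi>"
    using assms(2) unfolding conj_to_standard_def by blast
  have "kalg_hom T" using h(2) by (simp add: triangular_def kalg_aut_imp_kalg_hom)
  then have TT: "T \<circ> T = id" using standard_form_involution[OF two _ h(3)] by (simp add: involution_def)
  have "bij \<phi>" using h(1) by (simp add: kalg_aut_iff)
  then have i1: "inv \<phi> \<circ> \<phi> = id" and i2: "\<phi> \<circ> inv \<phi> = id"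
    by (simp_all add: bij_is_inj surj_iff[symmetric] bij_is_surj)
  have "\<tau> \<circ> \<tau> = \<phi> \<circ> T \<circ> (inv \<phi> \<circ> \<phi>) \<circ> T \<circ> inv \<phi>" by (simp add: h(4) comp_assoc)
  also have "\<dots> = \<phi> \<circ> (T \<circ> T) \<circ> inv \<phi>" by (simp add: i1 comp_assoc)
  also have "\<dots> = id" by (simp add: TT i2)
  finally show ?thesis by (simp add: involution_def)
qed

lemma involution_conj:
  fixes \<tau> \<phi> \<psi> :: "'a \<Rightarrow> 'a"
  assumes "involution \<tau>" "\<psi> \<circ> \<phi> = id" "\<phi> \<circ> \<psi> = id"
  shows "involution (\<psi> \<circ> \<tau> \<circ> \<phi>)"
proof -
  have "\<phi> (\<psi> x) = x" "\<psi> (\<phi> x) = x" for x using assms(2,3) by (simp_all add: pointfree_idE)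
  then show ?thesis using assms(1) by (simp add: involution_def fun_eq_iff involution_apply)
qed

lemma kalg_aut_conj:
  "kalg_aut \<tau> \<Longrightarrow> kalg_aut \<phi> \<Longrightarrow> kalg_aut \<psi> \<Longrightarrow> kalg_aut (\<psi> \<circ> \<tau> \<circ> \<phi>)"
  by (simp add: kalg_aut_iff kalg_hom_comp bij_comp)

lemma char2_involution_fixes_shift:
  fixes \<tau> :: "'k::comm_ring_1 R4 \<Rightarrow> 'k R4"
  assumes "(2::'k) = 0" "kalg_hom \<tau>" "involution \<tau>" "\<tau> v = v + c"
  shows "\<tau> c = c"
proof -
  have "ring_hom \<tau>" using assms(2) by (simp add: kalg_hom_def)
  with assms show ?thesis using char2_shift_involutive_iff[OF char2_R4] by (metis involution_apply)
qed

subsection \<open>Involutions fixing \<open>x\<close>\<close>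

lemma involution_case_z:
  fixes \<tau> :: "'k::field R4 \<Rightarrow> 'k R4"
  assumes two: "(2::'k) = 0" and \<tau>: "kalg_hom \<tau>" "involution \<tau>"
    and h: "\<tau> VX = VX" "\<tau> VY = VY" "\<tau> VZ = VZ + L2 q" "\<tau> VW = VW + L3 r" and q: "q \<noteq> 0"
  shows "form_ii \<tau>"
proof -
  have two2: "(2::'k poly poly) = 0" using char2_poly[OF char2_poly[OF two]] .
  have "\<tau> (L3 r) = L3 (pcompose r [:q, 1:])"
    using kalg_hom_eq_subst4[OF \<tau>(1), of "L3 r"] h by (simp add: subst4_L flip: L_linear subst3_VX_VY_L3)
  then have "pcompose r [:q, 1:] = r" using char2_involution_fixes_shift[OF two \<tau> h(4)] by simp
  then obtain \<eta> where "r = pcompose \<eta> [:0, q, 1:]" using char2_shift_invariant[OF two2 q] by blast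
  then have "subst4 (L3 \<eta>) VX VY (VZ\<^sup>2 + L2 q * VZ) VW = L3 r"
    by (simp add: subst4_L subst3_VX_VY_L3 flip: L_quadratic)
  then show ?thesis unfolding form_ii_def using h q by (intro exI[of _ q] exI[of _ \<eta>]) simp
qed

lemma form_iii_generators_eq:
  fixes p :: "'k::comm_ring_1 poly" and \<beta> a b :: "'k poly poly"
  shows "VY\<^sup>2 + L1 p * VY = L2 [:0, p, 1:]"
    and "subst4 (L2 \<beta>) VX (L2 [:0, p, 1:]) VZ VW = L2 (pcompose \<beta> [:0, p, 1:])"
    and "VZ\<^sup>2 + L2 (pcompose \<beta> [:0, p, 1:]) * VZ = L3 [:0, pcompose \<beta> [:0, p, 1:], 1:]"
    and "L2 a * VZ + L2 (pcompose b [:0, p, 1:]) * VY = L3 [:[:0, 1:] * pcompose b [:0, p, 1:], a:]"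
proof -
  show "VY\<^sup>2 + L1 p * VY = L2 [:0, p, 1:]"
    and "VZ\<^sup>2 + L2 (pcompose \<beta> [:0, p, 1:]) * VZ = L3 [:0, pcompose \<beta> [:0, p, 1:], 1:]"
    by (simp_all add: L_quadratic)
  show "subst4 (L2 \<beta>) VX (L2 [:0, p, 1:]) VZ VW = L2 (pcompose \<beta> [:0, p, 1:])"
    by (simp add: subst4_L subst2_VX_L2)
  let ?b = "pcompose b [:0, p, 1:]"
  have "[:[:0, 1:] * ?b, a:] = [:[:0, 1:]:] * [:?b:] + [:0, 1:] * [:a:]" by simp
  then have "L3 [:[:0, 1:] * ?b, a:] = VY * L2 ?b + VZ * L2 a"
    by (simp only: L_simps L_const VY_def VZ_def)
  then show "L2 a * VZ + L2 ?b * VY = L3 [:[:0, 1:] * ?b, a:]"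
    by (simp add: algebra_simps)
qed

lemma involution_case_yz:
  fixes \<tau> :: "'k::field R4 \<Rightarrow> 'k R4"
  assumes two: "(2::'k) = 0" and \<tau>: "kalg_hom \<tau>" "involution \<tau>"
    and h: "\<tau> VX = VX" "\<tau> VY = VY + L1 p" "\<tau> VZ = VZ + L2 q" "\<tau> VW = VW + L3 r"
    and p: "p \<noteq> 0" and q: "q \<noteq> 0"
  shows "form_iii \<tau>"
proof -
  let ?f = "[:0, p, 1:] :: 'k poly poly"
  have two1: "(2::'k poly) = 0" using char2_poly[OF two] .
  have "\<tau> (L2 q) = L2 (pcompose q [:p, 1:])"
    using kalg_hom_eq_subst4[OF \<tau>(1), of "L2 q"] h by (simp add: subst4_L flip: L_linear subst2_VX_L2)
  then have "pcompose q [:p, 1:] = q" using char2_involution_fixes_shift[OF two \<tau> h(3)] by simp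
  then obtain \<beta> where \<beta>: "q = pcompose \<beta> ?f" using char2_shift_invariant[OF two1 p] by blast
  with q have "\<beta> \<noteq> 0" by auto
  have "\<tau> (L3 r) = L3 (pcompose (map_poly (\<lambda>e. pcompose e [:p, 1:]) r) [:q, 1:])"
    using kalg_hom_eq_subst4[OF \<tau>(1), of "L3 r"] h by (simp add: subst4_L flip: L_linear subst3_VX_L2_L3)
  then have inv: "pcompose (map_poly (\<lambda>e. pcompose e [:p, 1:]) r) [:pcompose \<beta> ?f, 1:] = r"
    using char2_involution_fixes_shift[OF two \<tau> h(4)] \<beta> by simp
  obtain d where g: "is_gcd d [:p:] \<beta>" using is_gcd_exists by blast
  then obtain a b where da: "[:p:] = d * a" and db: "\<beta> = d * b" by (auto simp: is_gcd_def elim!: dvdE)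
  obtain G0 G1 where G: "r = pcompose (map_poly (\<lambda>e. pcompose e ?f) G0) [:0, pcompose \<beta> ?f, 1:]
     + pcompose (map_poly (\<lambda>e. pcompose e ?f) G1) [:0, pcompose \<beta> ?f, 1:] * [:[:0, 1:] * pcompose b ?f, a:]"
    using invariant_decomp[OF two p g da db inv] by blast
  have \<gamma>: "subst4 (L3 G0 + L3 G1 * VW) VX (L2 ?f) (L3 [:0, pcompose \<beta> ?f, 1:])
      (L3 [:[:0, 1:] * pcompose b ?f, a:]) = L3 r"
    by (simp only: subst4_simps subst4_L subst4_V subst3_VX_L2_L3, subst G, simp only: L_simps)
  show ?thesis
    unfolding form_iii_def Let_def
    apply (rule exI[of _ p], rule exI[of _ \<beta>], rule exI[of _ "L3 G0 + L3 G1 * VW"],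
        rule exI[of _ d], rule exI[of _ a], rule exI[of _ b])
    apply (simp only: form_iii_generators_eq \<gamma>)
    using p \<open>\<beta> \<noteq> 0\<close> g da db h \<beta> by (simp add: subst4_L subst1_VX)
qed

definition swap_yz :: "'k::comm_ring_1 R4 \<Rightarrow> 'k R4" where
  "swap_yz p = subst4 p VX VZ VY VW"

lemma kalg_hom_swap_yz: "kalg_hom swap_yz"
  unfolding swap_yz_def[abs_def] by (rule kalg_hom_subst4)

lemma swap_yz_vars: "swap_yz VX = VX" "swap_yz VY = VZ" "swap_yz VZ = VY" "swap_yz VW = VW"
  by (simp_all add: swap_yz_def subst4_V)

lemma swap_yz_swap_yz: "swap_yz \<circ> swap_yz = id"
  by (rule kalg_hom_eqI) (simp_all add: kalg_hom_comp kalg_hom_swap_yz kalg_hom_id swap_yz_vars)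

lemma kalg_aut_swap_yz: "kalg_aut swap_yz"
  using kalg_aut_of_inverse kalg_hom_swap_yz swap_yz_swap_yz by blast

lemma involution_case_y:
  fixes \<tau> :: "'k::field R4 \<Rightarrow> 'k R4"
  assumes two: "(2::'k) = 0" and \<tau>: "kalg_aut \<tau>" "involution \<tau>"
    and h: "\<tau> VX = VX" "\<tau> VY = VY + L1 p" "\<tau> VZ = VZ" "\<tau> VW = VW + L3 r" and p: "p \<noteq> 0"
  shows "conj_to_standard \<tau>"
proof -
  let ?\<tau> = "swap_yz \<circ> \<tau> \<circ> swap_yz"
  have hS: "ring_hom (swap_yz :: 'k R4 \<Rightarrow> 'k R4)" using kalg_hom_swap_yz kalg_hom_def by blast
  have aut: "kalg_aut ?\<tau>" by (intro kalg_aut_conj \<tau>(1) kalg_aut_swap_yz)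
  have inv: "involution ?\<tau>" by (rule involution_conj[OF \<tau>(2) swap_yz_swap_yz swap_yz_swap_yz])
  have "subst3 VX VZ VY r \<in> range L3"
    by (intro subst3_in_range ring_hom_L3 L_in_range vars_in_range)
  then obtain r' where r': "subst3 VX VZ VY r = L3 r'" by blast
  have "?\<tau> VX = VX" "?\<tau> VY = VY" "?\<tau> VZ = VZ + L2 [:p:]" "?\<tau> VW = VW + L3 r'"
    using h ring_hom_add[OF hS]
    by (simp_all add: swap_yz_vars L_const,
        simp_all add: swap_yz_def subst4_L subst1_VX r')
  moreover have "[:p:] \<noteq> 0" using p by simp
  ultimately have "form_ii ?\<tau>" using aut by (intro involution_case_z[OF two kalg_aut_imp_kalg_hom inv])
  moreover have "triangular ?\<tau>"
    using \<open>?\<tau> VX = VX\<close> \<open>?\<tau> VY = VY\<close> \<open>?\<tau> VZ = VZ + L2 [:p:]\<close> \<open>?\<tau> VW = VW + L3 r'\<close>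
    by (intro triangularI[OF aut, of 0 0]) (simp_all add: L_simps)
  ultimately have "conj_to_standard ?\<tau>" by (simp add: conj_to_standard_self)
  then show ?thesis by (rule conj_to_standard_of_conj[OF kalg_aut_swap_yz swap_yz_swap_yz swap_yz_swap_yz])
qed

lemma involution_fixing_x:
  fixes \<tau> :: "'k::field R4 \<Rightarrow> 'k R4"
  assumes two: "(2::'k) = 0" and \<tau>: "kalg_aut \<tau>" "involution \<tau>"
    and h: "\<tau> VX = VX" "\<tau> VY = VY + L1 p" "\<tau> VZ = VZ + L2 q" "\<tau> VW = VW + L3 r"
  shows "conj_to_standard \<tau>"
proof -
  have tri: "triangular \<tau>" by (rule triangularI[OF \<tau>(1), of 0]) (simp_all add: h L_simps)
  have hom: "kalg_hom \<tau>" using \<tau>(1) by (rule kalg_aut_imp_kalg_hom)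
  consider "p = 0" "q = 0" | "p = 0" "q \<noteq> 0" | "p \<noteq> 0" "q = 0" | "p \<noteq> 0" "q \<noteq> 0" by blast
  then show ?thesis
  proof cases
    case 1
    then have "form_i \<tau>" unfolding form_i_def using h by (simp add: L_simps)
    with tri show ?thesis by (simp add: conj_to_standard_self)
  next
    case 2
    then have "form_ii \<tau>" using h by (intro involution_case_z[OF two hom \<tau>(2)]) (simp_all add: L_simps)
    with tri show ?thesis by (simp add: conj_to_standard_self)
  next
    case 3
    then show ?thesis using h by (intro involution_case_y[OF two \<tau>]) (simp_all add: L_simps)
  next
    case 4
    then have "form_iii \<tau>" using h by (intro involution_case_yz[OF two hom \<tau>(2)])
    with tri show ?thesis by (simp add: conj_to_standard_self)
  qed
qed

subsection \<open>Involutions moving \<open>x\<close>\<close>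

lemma periodic_difference_solution:
  fixes p :: "'k::field poly"
  assumes c: "c \<noteq> 0" and p: "pcompose p [:c, 1:] = p"
  defines "s \<equiv> smult (inverse c) (p * [:0, 1:])"
  shows "pcompose s [:c, 1:] = s + p"
proof -
  have "pcompose s [:c, 1:] = smult (inverse c) (p * [:c, 1:])"
    by (simp only: s_def pcompose_smult pcompose_mult p pcompose_idL)
  also have "p * [:c, 1:] = smult c p + p * [:0, 1:]" by (simp add: mult_pCons_right)
  finally show ?thesis using c by (simp add: s_def smult_add_right)
qed

lemma swap_xy_shear_inverse:
  fixes s :: "'k::comm_ring_1 poly"
  defines "\<phi> \<equiv> \<lambda>P. subst4 P (VY + L1 s) VX VZ VW"
    and "\<psi> \<equiv> \<lambda>P. subst4 P VY (VX - subst1 VY s) VZ VW"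
  shows "\<psi> \<circ> \<phi> = id" "\<phi> \<circ> \<psi> = id"
proof -
  have k: "kalg_hom \<phi>" "kalg_hom \<psi>" unfolding \<phi>_def \<psi>_def by (rule kalg_hom_subst4)+
  show "\<psi> \<circ> \<phi> = id"
    by (intro kalg_hom_eqI) (simp_all add: k kalg_hom_comp kalg_hom_id,
        simp_all add: \<phi>_def \<psi>_def subst4_V subst4_simps subst4_L)
  have "\<phi> (VX - subst1 VY s) = \<phi> VX - \<phi> (subst1 VY s)"
    using k(1) by (simp add: kalg_hom_def ring_hom_diff)
  also have "\<phi> (subst1 VY s) = L1 s"
    using kalg_hom_subst4_commute[OF k(1), of "L1 s" VY VY VZ VW]
    by (simp add: subst4_L \<phi>_def subst4_V subst1_VX)
  finally have "\<phi> (VX - subst1 VY s) = VY" by (simp add: \<phi>_def subst4_V)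
  then show "\<phi> \<circ> \<psi> = id"
    by (intro kalg_hom_eqI kalg_hom_comp k kalg_hom_id) (simp_all add: \<phi>_def \<psi>_def subst4_V)
qed

lemma involution_shifting_x:
  fixes \<tau> :: "'k::field R4 \<Rightarrow> 'k R4"
  assumes two: "(2::'k) = 0" and \<tau>: "kalg_aut \<tau>" "involution \<tau>"
    and h: "\<tau> VX = VX + L0 c" "\<tau> VY = VY + L1 p" "\<tau> VZ = VZ + L2 q" "\<tau> VW = VW + L3 r"
    and c: "c \<noteq> 0"
  shows "conj_to_standard \<tau>"
proof -
  have hom: "kalg_hom \<tau>" using \<tau>(1) by (rule kalg_aut_imp_kalg_hom)
  have hT: "ring_hom \<tau>" using hom by (simp add: kalg_hom_def)
  have shift: "\<tau> (L1 e) = L1 (pcompose e [:c, 1:])" for e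
    using kalg_hom_eq_subst4[OF hom, of "L1 e"] h by (simp add: subst4_L flip: L_linear subst1_L1)
  then have "pcompose p [:c, 1:] = p" using char2_involution_fixes_shift[OF two hom \<tau>(2) h(2)] by simp
  define s where "s = smult (inverse c) (p * [:0, 1:])"
  have s: "pcompose s [:c, 1:] = s + p" unfolding s_def by (rule periodic_difference_solution[OF c]) fact
  define \<phi> where "\<phi> = (\<lambda>P. subst4 P (VY + L1 s) VX VZ VW)"
  define \<psi> where "\<psi> = (\<lambda>P. subst4 P VY (VX - subst1 VY s) VZ VW)"
  have \<psi>\<phi>: "\<psi> \<circ> \<phi> = id" and \<phi>\<psi>: "\<phi> \<circ> \<psi> = id"
    unfolding \<phi>_def \<psi>_def by (rule swap_xy_shear_inverse)+
  have "kalg_hom \<phi>" "kalg_hom \<psi>" unfolding \<phi>_def \<psi>_def by (rule kalg_hom_subst4)+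
  then have \<phi>: "kalg_aut \<phi>" and \<psi>: "kalg_aut \<psi>" using kalg_aut_of_inverse \<psi>\<phi> \<phi>\<psi> by blast+
  have "\<tau> (VY + L1 s) = VY + L1 s + (L1 p + L1 p)"
    using h(2) shift[of s] by (simp add: ring_hom_add[OF hT] s L_simps algebra_simps)
  then have \<tau>\<phi>X: "\<tau> (\<phi> VX) = \<phi> VX"
    by (simp add: \<phi>_def subst4_V char2_add_self[OF char2_R4[OF two]])
  let ?\<tau> = "\<psi> \<circ> \<tau> \<circ> \<phi>"
  have "?\<tau> VX = VX" using \<tau>\<phi>X \<psi>\<phi> by (simp add: pointfree_idE)
  moreover have "?\<tau> VY = VY + L1 [:c:]"
    using h(1) by (simp add: \<phi>_def \<psi>_def subst4_V subst4_simps subst4_L L_const)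
  moreover have "\<psi> (L2 q) \<in> range L2" "\<psi> (L3 r) \<in> range L3"
    unfolding \<psi>_def subst4_L
    by (intro subst2_in_range subst3_in_range ring_hom_L2 ring_hom_L3 range_ring_hom_diff
        subst1_in_range L_in_range vars_in_range)+
  then obtain q' r' where "?\<tau> VZ = VZ + L2 q'" "?\<tau> VW = VW + L3 r'"
    using h(3,4) by (auto simp: \<phi>_def \<psi>_def subst4_V subst4_simps)
  ultimately have "conj_to_standard ?\<tau>"
    using involution_conj[OF \<tau>(2) \<psi>\<phi> \<phi>\<psi>]
    by (intro involution_fixing_x[OF two kalg_aut_conj[OF \<tau>(1) \<phi> \<psi>]])
  then show ?thesis by (rule conj_to_standard_of_conj[OF \<phi> \<psi>\<phi> \<phi>\<psi>])
qed

lemma involution_scalar_eq_1: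
  fixes \<tau> :: "'k::field R4 \<Rightarrow> 'k R4" and L :: "'b::comm_ring_1 \<Rightarrow> 'k R4"
  assumes two: "(2::'k) = 0" and \<tau>: "kalg_hom \<tau>" "involution \<tau>"
    and L: "ring_hom L" "\<And>a. L0 a \<in> range L"
    and v: "\<tau> v = L0 l * v + L c" "\<tau> (L c) \<in> range L"
    and coeff: "\<And>u w. L0 u * v + L w = v \<Longrightarrow> u = 1"
  shows "l = 1"
proof -
  obtain w where w: "\<tau> (L c) = L w" using v(2) by blast
  obtain e where e: "L0 l = L e" using L(2) by blast
  have "v = \<tau> (\<tau> v)" using \<tau>(2) by (simp add: involution_apply)
  also have "\<dots> = L0 (l * l) * v + L (e * c + w)"
    using \<tau>(1) unfolding kalg_hom_def
    by (simp add: v(1) w ring_hom_add ring_hom_mult ring_hom_add[OF L(1)] ring_hom_mult[OF L(1)]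
        flip: e add: L_simps algebra_simps)
  finally have "l * l = 1" using coeff by metis
  then show ?thesis by (rule char2_square_eq_1[OF two])
qed

lemma triangular_involution_unipotent:
  fixes \<tau> :: "'k::field R4 \<Rightarrow> 'k R4"
  assumes two: "(2::'k) = 0" and "triangular \<tau>" "involution \<tau>"
  shows "\<exists>p1 p2 p3 p4. \<tau> VX = VX + L0 p1 \<and> \<tau> VY = VY + L1 p2 \<and> \<tau> VZ = VZ + L2 p3 \<and>
    \<tau> VW = VW + L3 p4"
proof -
  have hom: "kalg_hom \<tau>" using assms(2) by (simp add: triangular_def kalg_aut_imp_kalg_hom)
  note \<tau> = hom assms(3)
  obtain l1 l2 l3 l4 p1 p2 p3 p4 where
    h: "\<tau> VX = L0 l1 * VX + L0 p1" "\<tau> VY = L0 l2 * VY + L1 p2"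
       "\<tau> VZ = L0 l3 * VZ + L2 p3" "\<tau> VW = L0 l4 * VW + L3 p4"
    using assms(2) unfolding triangular_def by blast
  have r1: "\<tau> (L0 p1) \<in> range L0" using hom by (simp add: kalg_hom_def)
  have "l1 = 1"
    by (rule involution_scalar_eq_1[OF two \<tau> ring_hom_L0 _ h(1) r1]) (auto intro: coeff_VX_eq_1)
  then have "\<tau> VX = VX + L0 p1" using h(1) by (simp add: L_simps)
  then have x: "\<tau> VX \<in> range L1" "\<tau> VX \<in> range L2" "\<tau> VX \<in> range L3"
    by (auto intro!: range_ring_hom_add ring_hom_L1 ring_hom_L2 ring_hom_L3 vars_in_range L_in_range)
  have r2: "\<tau> (L1 p2) \<in> range L1"
    unfolding kalg_hom_eq_subst4[OF hom, of "L1 p2"] subst4_L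
    by (rule subst1_in_range[OF ring_hom_L1 L_in_range(1) x(1)])
  have "l2 = 1"
    by (rule involution_scalar_eq_1[OF two \<tau> ring_hom_L1 L_in_range(1) h(2) r2]) (rule coeff_VY_eq_1)
  then have "\<tau> VY = VY + L1 p2" using h(2) by (simp add: L_simps)
  then have y: "\<tau> VY \<in> range L2" "\<tau> VY \<in> range L3"
    by (auto intro!: range_ring_hom_add ring_hom_L2 ring_hom_L3 vars_in_range L_in_range)
  have r3: "\<tau> (L2 p3) \<in> range L2"
    unfolding kalg_hom_eq_subst4[OF hom, of "L2 p3"] subst4_L
    by (rule subst2_in_range[OF ring_hom_L2 L_in_range(2) x(2) y(1)])
  have "l3 = 1"
    by (rule involution_scalar_eq_1[OF two \<tau> ring_hom_L2 L_in_range(2) h(3) r3]) (rule coeff_VZ_eq_1)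
  then have "\<tau> VZ = VZ + L2 p3" using h(3) by (simp add: L_simps)
  then have "\<tau> VZ \<in> range L3"
    by (auto intro!: range_ring_hom_add ring_hom_L3 vars_in_range L_in_range)
  then have r4: "\<tau> (L3 p4) \<in> range L3"
    unfolding kalg_hom_eq_subst4[OF hom, of "L3 p4"] subst4_L
    by (rule subst3_in_range[OF ring_hom_L3 L_in_range(3) x(3) y(2)])
  have "l4 = 1"
    by (rule involution_scalar_eq_1[OF two \<tau> ring_hom_L3 L_in_range(3) h(4) r4]) (rule coeff_VW_eq_1)
  with \<open>l1 = 1\<close> \<open>l2 = 1\<close> \<open>l3 = 1\<close> h show ?thesis by (simp add: L_simps)
qed

lemma triangular_involution_conj_to_standard:
  fixes \<tau> :: "'k::field R4 \<Rightarrow> 'k R4"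
  assumes two: "(2::'k) = 0" and "triangular \<tau>" "involution \<tau>"
  shows "conj_to_standard \<tau>"
proof -
  have \<tau>: "kalg_aut \<tau>" using assms(2) by (simp add: triangular_def)
  obtain p1 p2 p3 p4 where h: "\<tau> VX = VX + L0 p1" "\<tau> VY = VY + L1 p2" "\<tau> VZ = VZ + L2 p3"
    "\<tau> VW = VW + L3 p4"
    using triangular_involution_unipotent[OF assms] by blast
  show ?thesis
  proof (cases "p1 = 0")
    case True
    with h show ?thesis by (intro involution_fixing_x[OF two \<tau> assms(3)]) (simp_all add: L_simps)
  next
    case False
    with h show ?thesis by (rule involution_shifting_x[OF two \<tau> assms(3)])
  qed
qed

theorem mainTheorem1:
  assumes "CHAR('k::field) = 2"
  shows "(\<forall>T :: 'k R4 \<Rightarrow> 'k R4. kalg_aut T \<and> (form_i T \<or> form_ii T \<or> form_iii T)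
            \<longrightarrow> involution T) \<and>
         (\<forall>\<tau> :: 'k R4 \<Rightarrow> 'k R4. triangular \<tau> \<longrightarrow>
            (involution \<tau> \<longleftrightarrow>
             (\<exists>\<phi> T. kalg_aut \<phi> \<and> triangular T \<and> (form_i T \<or> form_ii T \<or> form_iii T) \<and>
                     \<tau> = \<phi> \<circ> T \<circ> inv \<phi>)))"
proof -
  have two: "(2::'k) = 0" using of_nat_CHAR[where 'a='k] assms by simp
  show ?thesis
    using standard_form_involution[OF two] kalg_aut_imp_kalg_hom
      triangular_involution_conj_to_standard[OF two] conj_to_standard_involution[OF two]
    unfolding conj_to_standard_def by blast
qed

end
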